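(* Let $\mathcal{A}$ be a complex Banach algebra with unity, $k$ a positive integer, and let $a,b\in\mathcal{A}$ both be g$\pi$-Hirano invertible. Suppose $\alpha_{1}\cdots\alpha_{k}ab=\alpha_{1}\cdots\alpha_{k}ba$ for all $\alpha_{1},\dots,\alpha_{k}\in\{a,b\}$. Then $1+a^{g\pi H}b$ is g$\pi$-Hirano invertible if and only if $a+b$ is g$\pi$-Hirano invertible.
   Context: $\mathcal{A}^{qnil}$ denotes the set of quasinilpotent elements of $\mathcal{A}$ (spectrum equal to $\{0\}$). An element $x\in\mathcal{A}$ is a g$\pi$-Hirano inverse of $a$ if $xax=x$, $ax=xa$ and $a-a^{n+2}x\in\mathcal{A}^{qnil}$ for some positive integer $n$; it is unique when it exists and is denoted $a^{g\pi H}$, and $a$ is then called g$\pi$-Hirano invertible. *)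

theory Defs
  imports "HOL-Analysis.Analysis"
begin

class complex_banach_algebra_1 = banach + real_normed_algebra_1 +
  fixes scaleC :: "complex \<Rightarrow> 'a \<Rightarrow> 'a"
  assumes scaleC_of_real: "scaleC (complex_of_real r) x = scaleR r x"
    and scaleC_add_left: "scaleC (c + d) x = scaleC c x + scaleC d x"
    and scaleC_add_right: "scaleC c (x + y) = scaleC c x + scaleC c y"
    and scaleC_scaleC: "scaleC c (scaleC d x) = scaleC (c * d) x"
    and scaleC_one: "scaleC 1 x = x"
    and mult_scaleC_left: "scaleC c x * y = scaleC c (x * y)"
    and mult_scaleC_right: "x * scaleC c y = scaleC c (x * y)"
    and norm_scaleC: "norm (scaleC c x) = cmod c * norm x"

definition invertible_el :: "'a::ring_1 \<Rightarrow> bool" where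
  "invertible_el x \<longleftrightarrow> (\<exists>y. x * y = 1 \<and> y * x = 1)"

definition spectrum_el :: "'a::complex_banach_algebra_1 \<Rightarrow> complex set" where
  "spectrum_el a = {z. \<not> invertible_el (scaleC z 1 - a)}"

definition quasinilpotent :: "'a::complex_banach_algebra_1 \<Rightarrow> bool" where
  "quasinilpotent a \<longleftrightarrow> spectrum_el a = {0}"

definition is_gpiH_inverse :: "'a::complex_banach_algebra_1 \<Rightarrow> 'a \<Rightarrow> bool" where
  "is_gpiH_inverse a x \<longleftrightarrow> x * a * x = x \<and> a * x = x * a \<and>
     (\<exists>n::nat. n > 0 \<and> quasinilpotent (a - a ^ (n + 2) * x))"

definition gpiH_invertible :: "'a::complex_banach_algebra_1 \<Rightarrow> bool" where
  "gpiH_invertible a \<longleftrightarrow> (\<exists>x. is_gpiH_inverse a x)"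

definition gpiH_inv :: "'a::complex_banach_algebra_1 \<Rightarrow> 'a" where
  "gpiH_inv a = (THE x. is_gpiH_inverse a x)"

end

theory Submission
  imports Defs
begin

text \<open>Call \<open>q\<close> norm-quasinilpotent if \<open>\<parallel>q\<^sup>n\<parallel> \<le> C \<epsilon>\<^sup>n\<close> for every \<open>\<epsilon> > 0\<close>.  In a complex Banach algebra
  this is equivalent to quasinilpotence: the resolvent \<open>z \<mapsto> (1 - z q)\<^sup>-\<^sup>1\<close> is continuous on all of
  \<open>\<complex>\<close>, and averaging it over the \<open>n\<close>-th roots of unity gives \<open>(1 - z\<^sup>n q\<^sup>n)\<^sup>-\<^sup>1\<close>, which bounds
  \<open>s\<^sup>n \<parallel>q\<^sup>n\<parallel>\<close> for \<open>s\<close> in an interval that can be enlarged by a fixed step.  Hence \<open>x\<close> is a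
  g\<open>\<pi>\<close>-Hirano inverse of \<open>a\<close> iff \<open>x a x = x\<close>, \<open>a x = x a\<close> and \<open>a\<^sup>n - a x\<close> is quasinilpotent, and
  \<open>a\<close> is g\<open>\<pi>\<close>-Hirano invertible iff some \<open>a\<^sup>n - a\<^sup>2\<^sup>n\<close> is quasinilpotent; the binomial series of
  \<open>(1 - 4 t) powr (-1/2)\<close> lifts such a quasi-idempotent \<open>a\<^sup>n\<close> to an idempotent.

  Let \<open>e = a x\<close> for the inverse \<open>x\<close> of \<open>a\<close>.  The word hypothesis makes \<open>b\<close>, hence \<open>1 + x b\<close> and
  \<open>a + b\<close>, upper triangular with respect to \<open>e\<close>, and a triangular element has a quasi-idempotent
  power iff both diagonal corners do.  The corners of \<open>1 + x b\<close> are \<open>1 - e\<close> and \<open>e + x b e\<close>.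
  Those of \<open>a + b\<close> are \<open>b (1 - e) + a (1 - e)\<close>, a word-commuting sum with \<open>a (1 - e)\<close>
  quasinilpotent, and \<open>a e (e + x b e)\<close>, where \<open>a e\<close> is a unit of the corner algebra up to a
  commuting quasinilpotent.\<close>

section \<open>Commuting elements\<close>

definition commute :: "'a::ring_1 \<Rightarrow> 'a \<Rightarrow> bool" where
  "commute x y \<longleftrightarrow> x * y = y * x"

lemma commuteD: "commute x y \<Longrightarrow> x * y = y * x"
  unfolding commute_def by simp

lemma commute_sym: "commute x y \<Longrightarrow> commute y x"
  unfolding commute_def by simp

lemma commute_refl: "commute x x"
  and commute_one_left: "commute 1 x" and commute_one_right: "commute x 1"
  and commute_zero_left: "commute 0 x" and commute_zero_right: "commute x 0"
  unfolding commute_def by simp_all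

lemma commute_mult_left: "commute x z \<Longrightarrow> commute y z \<Longrightarrow> commute (x * y) z"
  and commute_mult_right: "commute x y \<Longrightarrow> commute x z \<Longrightarrow> commute x (y * z)"
  unfolding commute_def by (metis mult.assoc)+

lemma commute_add_left: "commute x z \<Longrightarrow> commute y z \<Longrightarrow> commute (x + y) z"
  and commute_add_right: "commute x y \<Longrightarrow> commute x z \<Longrightarrow> commute x (y + z)"
  and commute_diff_left: "commute x z \<Longrightarrow> commute y z \<Longrightarrow> commute (x - y) z"
  and commute_diff_right: "commute x y \<Longrightarrow> commute x z \<Longrightarrow> commute x (y - z)"
  and commute_minus_left: "commute x y \<Longrightarrow> commute (- x) y"
  and commute_minus_right: "commute x y \<Longrightarrow> commute x (- y)"
  unfolding commute_def by (simp_all add: algebra_simps)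

lemma commute_power_left: "commute x y \<Longrightarrow> commute (x ^ n) y"
  and commute_power_right: "commute x y \<Longrightarrow> commute x (y ^ n)"
  unfolding commute_def by (metis power_commuting_commutes)+

lemma commute_scaleR_left: "commute x y \<Longrightarrow> commute (r *\<^sub>R x) (y::'a::real_algebra_1)"
  and commute_scaleR_right: "commute x y \<Longrightarrow> commute x (r *\<^sub>R (y::'a::real_algebra_1))"
  unfolding commute_def by simp_all

lemma commute_sum_left: "(\<And>i. i \<in> A \<Longrightarrow> commute (f i) x) \<Longrightarrow> commute (sum f A) x"
  and commute_sum_right: "(\<And>i. i \<in> A \<Longrightarrow> commute x (f i)) \<Longrightarrow> commute x (sum f A)"
  unfolding commute_def by (simp_all add: sum_distrib_left sum_distrib_right)

lemmas commute_intros = commute_refl commute_one_left commute_one_right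
  commute_zero_left commute_zero_right commute_mult_left commute_mult_right
  commute_add_left commute_add_right commute_diff_left commute_diff_right
  commute_minus_left commute_minus_right commute_power_left commute_power_right
  commute_scaleR_left commute_scaleR_right

lemma commute_suminf:
  fixes g :: "nat \<Rightarrow> 'a::{real_normed_algebra_1,banach}"
  assumes "summable g" "\<And>n. commute x (g n)"
  shows "commute x (suminf g)"
proof -
  have "x * suminf g = (\<Sum>n. x * g n)" by (rule suminf_mult[OF assms(1), symmetric])
  also have "\<dots> = (\<Sum>n. g n * x)" using assms(2) unfolding commute_def by simp
  also have "\<dots> = suminf g * x" by (rule suminf_mult2[OF assms(1), symmetric])
  finally show ?thesis unfolding commute_def .
qed

lemma power_mult_commute: "commute x y \<Longrightarrow> (x * y) ^ n = x ^ n * y ^ n"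
proof (induction n)
  case (Suc n)
  have "(x * y) ^ Suc n = x * (y * x ^ n) * y ^ n" using Suc by (simp add: mult.assoc)
  also have "\<dots> = x ^ Suc n * y ^ Suc n"
    using commuteD[OF commute_power_right[OF commute_sym[OF Suc.prems]]]
    by (simp add: mult.assoc power_commutes)
  finally show ?case .
qed simp

lemma commute_inverse:
  assumes "x * y = 1" "y * x = 1" "commute x u"
  shows "commute y u"
proof -
  have "y * u = y * (u * x) * y" using assms(1) by (simp add: mult.assoc)
  also have "\<dots> = (y * x) * u * y" using assms(3) by (simp add: commute_def mult.assoc)
  also have "\<dots> = u * y" using assms(2) by simp
  finally show ?thesis unfolding commute_def .
qed

lemma left_inverse_eq_right_inverse: "x * y = 1 \<Longrightarrow> (z::'a::ring_1) * x = 1 \<Longrightarrow> y = z"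
  by (metis mult.assoc mult_1_left mult_1_right)

lemma one_diff_power_eq_ring:
  fixes x :: "'a::ring_1"
  shows "(1 - x) * (\<Sum>i<n. x ^ i) = 1 - x ^ n" and "(\<Sum>i<n. x ^ i) * (1 - x) = 1 - x ^ n"
proof -
  show left: "(1 - x) * (\<Sum>i<n. x ^ i) = 1 - x ^ n"
  proof (induction n)
    case (Suc n)
    have "(1 - x) * (\<Sum>i<Suc n. x ^ i) = (1 - x) * (\<Sum>i<n. x ^ i) + (1 - x) * x ^ n"
      by (simp add: distrib_left)
    also have "\<dots> = 1 - x ^ n + (x ^ n - x * x ^ n)"
      unfolding Suc.IH by (simp add: left_diff_distrib)
    finally show ?case by simp
  qed simp
  have "commute (\<Sum>i<n. x ^ i) (1 - x)"
    by (intro commute_sum_left commute_intros)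
  then show "(\<Sum>i<n. x ^ i) * (1 - x) = 1 - x ^ n"
    using left by (simp add: commute_def)
qed

lemma power_diff_power_commute:
  assumes "commute x y"
  shows "x ^ n - y ^ n = (x - y) * (\<Sum>i<n. x ^ i * y ^ (n - Suc i))"
proof (induction n)
  case (Suc n)
  have "(\<Sum>i<n. x ^ i * y ^ (Suc n - Suc i)) = (\<Sum>i<n. x ^ i * y ^ (n - Suc i)) * y"
    unfolding sum_distrib_right
    by (intro sum.cong refl) (simp add: mult.assoc power_Suc2[symmetric] Suc_diff_Suc)
  then have "(x - y) * (\<Sum>i<Suc n. x ^ i * y ^ (Suc n - Suc i)) = (x ^ n - y ^ n) * y + (x - y) * x ^ n"
    by (simp add: Suc mult.assoc algebra_simps)
  also have "\<dots> = x ^ Suc n - y ^ Suc n"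
    using commuteD[OF commute_power_left[OF assms, of n]]
    by (simp add: algebra_simps power_commutes)
  finally show ?case by simp
qed simp

lemma power_add_orth:
  fixes x y :: "'a::ring_1"
  assumes "x * y = 0"
  shows "(x + y) ^ m = (\<Sum>i\<le>m. y ^ i * x ^ (m - i))"
proof (induction m)
  case (Suc m)
  have yx: "y ^ i * x ^ (m - i) * y = (if i = m then y ^ Suc m else 0)" if "i \<le> m" for i
  proof (cases "i = m")
    case False
    then have "x ^ (m - i) * y = x ^ (m - i - 1) * (x * y)"
      using that by (metis Suc_diff_Suc le_neq_implies_less mult.assoc power_Suc2 diff_Suc_1)
    then show ?thesis using False assms by (simp add: mult.assoc)
  qed (simp add: power_commutes)
  have "(x + y) ^ Suc m = (\<Sum>i\<le>m. y ^ i * x ^ (m - i)) * x + (\<Sum>i\<le>m. y ^ i * x ^ (m - i) * y)"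
    by (simp add: Suc power_Suc2 distrib_left sum_distrib_right del: power_Suc)
  also have "(\<Sum>i\<le>m. y ^ i * x ^ (m - i) * y) = y ^ Suc m"
    by (simp add: yx sum.delta' del: power_Suc)
  also have "(\<Sum>i\<le>m. y ^ i * x ^ (m - i)) * x = (\<Sum>i\<le>m. y ^ i * x ^ (Suc m - i))"
    unfolding sum_distrib_right
    by (intro sum.cong refl) (simp add: mult.assoc power_Suc2[symmetric] Suc_diff_le)
  finally show ?case by simp
qed simp

section \<open>Norm-quasinilpotent elements\<close>

definition norm_qnil :: "'a::real_normed_algebra_1 \<Rightarrow> bool" where
  "norm_qnil q \<longleftrightarrow> (\<forall>\<epsilon>>0. \<exists>C. \<forall>n. norm (q ^ n) \<le> C * \<epsilon> ^ n)"

lemma norm_qnilD: "norm_qnil q \<Longrightarrow> \<epsilon> > 0 \<Longrightarrow> \<exists>C. \<forall>n. norm (q ^ n) \<le> C * \<epsilon> ^ n"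
  unfolding norm_qnil_def by blast

lemma power_bound_ge_one: "(\<And>n. norm ((q::'a::real_normed_algebra_1) ^ n) \<le> C * \<epsilon> ^ n) \<Longrightarrow> 1 \<le> C"
  by (metis mult.right_neutral norm_one power_0)

lemma norm_mult3_le: "norm ((a::'a::real_normed_algebra) * b * c) \<le> norm a * norm b * norm c"
  by (rule order.trans[OF norm_mult_ineq mult_right_mono[OF norm_mult_ineq norm_ge_zero]])

lemma norm_power_mult_le: "norm ((x::'a::real_normed_algebra_1) ^ n * y) \<le> norm x ^ n * norm y"
  by (rule order.trans[OF norm_mult_ineq mult_right_mono[OF norm_power_ineq norm_ge_zero]])

lemma norm_mult_power_le: "norm (y * (x::'a::real_normed_algebra_1) ^ n) \<le> norm y * norm x ^ n"
  by (rule order.trans[OF norm_mult_ineq mult_left_mono[OF norm_power_ineq norm_ge_zero]])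

lemma eq_0_if_norm_le_geometric:
  fixes x :: "'a::real_normed_vector"
  assumes "\<And>m. norm x \<le> C * d ^ m" "0 \<le> d" "d < 1"
  shows "x = 0"
proof -
  have "(\<lambda>m. C * d ^ m) \<longlonglongrightarrow> C * 0"
    by (intro tendsto_mult tendsto_const LIMSEQ_power_zero) (use assms in auto)
  then have "norm x \<le> 0"
    by (intro LIMSEQ_le_const[of _ 0]) (use assms in auto)
  then show ?thesis by simp
qed

lemma norm_qnil_shift:
  fixes q :: "'a::real_normed_algebra_1"
  assumes "\<And>\<epsilon>. \<epsilon> > 0 \<Longrightarrow> \<exists>C. \<forall>m. norm (q ^ (m + j)) \<le> C * \<epsilon> ^ m"
  shows "norm_qnil q"
  unfolding norm_qnil_def
proof (intro allI impI)
  fix \<epsilon> :: real assume e: "\<epsilon> > 0"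
  obtain C where C: "\<And>m. norm (q ^ (m + j)) \<le> C * \<epsilon> ^ m" using assms[OF e] by blast
  define K where "K = (1 + norm q) ^ j"
  define D where "D = max (\<bar>C\<bar> / \<epsilon> ^ j) (K / min 1 \<epsilon> ^ j)"
  show "\<exists>C. \<forall>n. norm (q ^ n) \<le> C * \<epsilon> ^ n"
  proof (intro exI allI)
    fix n
    show "norm (q ^ n) \<le> D * \<epsilon> ^ n"
    proof (cases "j \<le> n")
      case True
      have "norm (q ^ n) \<le> C * \<epsilon> ^ (n - j)" using C[of "n - j"] True by simp
      also have "\<dots> \<le> \<bar>C\<bar> * \<epsilon> ^ (n - j)" using e by (intro mult_right_mono) auto
      also have "\<dots> = \<bar>C\<bar> / \<epsilon> ^ j * \<epsilon> ^ n"
        using e True by (simp add: power_diff field_simps)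
      also have "\<dots> \<le> D * \<epsilon> ^ n" unfolding D_def using e by (intro mult_right_mono) auto
      finally show ?thesis .
    next
      case False
      have "min 1 \<epsilon> ^ j \<le> min 1 \<epsilon> ^ n" using False e by (intro power_decreasing) auto
      also have "\<dots> \<le> \<epsilon> ^ n" using e by (intro power_mono) auto
      finally have small: "min 1 \<epsilon> ^ j \<le> \<epsilon> ^ n" .
      have "norm (q ^ n) \<le> (1 + norm q) ^ n"
        by (intro order.trans[OF norm_power_ineq] power_mono) auto
      also have "\<dots> \<le> K" unfolding K_def using False by (intro power_increasing) auto
      also have "\<dots> = K / min 1 \<epsilon> ^ j * min 1 \<epsilon> ^ j" using e by simp
      also have "\<dots> \<le> K / min 1 \<epsilon> ^ j * \<epsilon> ^ n"
        using small e unfolding K_def by (intro mult_left_mono) auto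
      also have "\<dots> \<le> D * \<epsilon> ^ n" unfolding D_def using e by (intro mult_right_mono) auto
      finally show ?thesis .
    qed
  qed
qed

lemma norm_qnil_dominated:
  fixes q t :: "'a::real_normed_algebra_1"
  assumes t: "norm_qnil t" and K: "0 \<le> K"
    and le: "\<And>m. norm (q ^ (m + j)) \<le> K * norm (t ^ (m + i))"
  shows "norm_qnil q"
proof (rule norm_qnil_shift[where j = j])
  fix \<epsilon> :: real assume e: "\<epsilon> > 0"
  obtain C where C: "\<And>n. norm (t ^ n) \<le> C * \<epsilon> ^ n" using norm_qnilD[OF t e] by auto
  show "\<exists>C. \<forall>m. norm (q ^ (m + j)) \<le> C * \<epsilon> ^ m"
  proof (intro exI allI)
    fix m
    have "norm (q ^ (m + j)) \<le> K * (C * \<epsilon> ^ (m + i))"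
      using le[of m] C[of "m + i"] K by (meson mult_left_mono order.trans)
    also have "\<dots> = (K * C * \<epsilon> ^ i) * \<epsilon> ^ m" by (simp add: power_add)
    finally show "norm (q ^ (m + j)) \<le> (K * C * \<epsilon> ^ i) * \<epsilon> ^ m" .
  qed
qed

lemma norm_qnil_0: "norm_qnil (0::'a::real_normed_algebra_1)"
  unfolding norm_qnil_def
proof (intro allI impI exI)
  fix \<epsilon> :: real and n assume "\<epsilon> > 0"
  then show "norm ((0::'a) ^ n) \<le> 1 * \<epsilon> ^ n" by (cases n) auto
qed

lemma norm_qnil_mult_left:
  fixes q u :: "'a::real_normed_algebra_1"
  assumes q: "norm_qnil q" and uq: "commute u q"
  shows "norm_qnil (u * q)"
  unfolding norm_qnil_def
proof (intro allI impI)
  fix \<epsilon> :: real assume e: "\<epsilon> > 0"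
  define \<delta> where "\<delta> = \<epsilon> / (1 + norm u)"
  have "\<delta> > 0" unfolding \<delta>_def using e by (simp add: add_pos_nonneg)
  then obtain C where C: "\<And>n. norm (q ^ n) \<le> C * \<delta> ^ n" using norm_qnilD[OF q] by blast
  have "0 < 1 + norm u" using norm_ge_zero[of u] by linarith
  then have "(1 + norm u) * \<delta> = \<epsilon>" unfolding \<delta>_def by simp
  then have u\<delta>: "(1 + norm u) ^ n * \<delta> ^ n = \<epsilon> ^ n" for n by (metis power_mult_distrib)
  show "\<exists>C. \<forall>n. norm ((u * q) ^ n) \<le> C * \<epsilon> ^ n"
  proof (intro exI allI)
    fix n
    have "norm ((u * q) ^ n) \<le> norm (u ^ n) * norm (q ^ n)"
      unfolding power_mult_commute[OF uq] by (rule norm_mult_ineq)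
    also have "\<dots> \<le> (1 + norm u) ^ n * (C * \<delta> ^ n)"
      by (intro mult_mono C order.trans[OF norm_power_ineq] power_mono) auto
    also have "\<dots> = C * \<epsilon> ^ n" by (simp flip: u\<delta> add: mult_ac)
    finally show "norm ((u * q) ^ n) \<le> C * \<epsilon> ^ n" .
  qed
qed

lemma norm_qnil_mult_right: "norm_qnil q \<Longrightarrow> commute u q \<Longrightarrow> norm_qnil (q * u)"
  using norm_qnil_mult_left by (metis commute_def)

lemma norm_qnil_minus: "norm_qnil q \<Longrightarrow> norm_qnil (- q)"
  using norm_qnil_mult_left[of q "-1"] by (simp add: commute_def)

lemma norm_qnil_scaleR: "norm_qnil q \<Longrightarrow> norm_qnil (r *\<^sub>R q)"
  using norm_qnil_mult_left[of q "of_real r"] unfolding scaleR_conv_of_real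
  by (simp add: commute_def of_real_def)

lemma norm_qnil_power: "norm_qnil q \<Longrightarrow> 0 < n \<Longrightarrow> norm_qnil (q ^ n)"
  using norm_qnil_mult_left[of q "q ^ (n - 1)"] power_minus_mult[of n q]
  by (simp add: commute_def power_commutes)

lemma norm_qnil_root:
  fixes q :: "'a::real_normed_algebra_1"
  assumes "norm_qnil (q ^ n)" "0 < n"
  shows "norm_qnil q"
  unfolding norm_qnil_def
proof (intro allI impI)
  fix \<epsilon> :: real assume e: "\<epsilon> > 0"
  obtain C where C: "\<And>t. norm ((q ^ n) ^ t) \<le> C * (\<epsilon> ^ n) ^ t"
    using norm_qnilD[OF assms(1), of "\<epsilon> ^ n"] e by auto
  define K where "K = (1 + norm q) ^ n / min 1 \<epsilon> ^ n"
  have rem: "norm (q ^ r) \<le> K * \<epsilon> ^ r" if "r < n" for r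
  proof -
    have "norm (q ^ r) \<le> (1 + norm q) ^ r" by (intro order.trans[OF norm_power_ineq] power_mono) auto
    also have "\<dots> \<le> (1 + norm q) ^ n" using that by (intro power_increasing) auto
    also have "\<dots> = K * min 1 \<epsilon> ^ n" unfolding K_def using e by simp
    also have "\<dots> \<le> K * \<epsilon> ^ r"
    proof (intro mult_left_mono)
      have "min 1 \<epsilon> ^ n \<le> min 1 \<epsilon> ^ r" using that e by (intro power_decreasing) auto
      also have "\<dots> \<le> \<epsilon> ^ r" using e by (intro power_mono) auto
      finally show "min 1 \<epsilon> ^ n \<le> \<epsilon> ^ r" .
    qed (use e in \<open>simp add: K_def\<close>)
    finally show ?thesis .
  qed
  show "\<exists>C. \<forall>m. norm (q ^ m) \<le> C * \<epsilon> ^ m"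
  proof (intro exI allI)
    fix m
    define t r where "t = m div n" and "r = m mod n"
    have m: "m = n * t + r" unfolding t_def r_def by simp
    have "norm (q ^ m) \<le> norm ((q ^ n) ^ t) * norm (q ^ r)"
      unfolding m power_add power_mult by (rule norm_mult_ineq)
    also have "\<dots> \<le> (C * (\<epsilon> ^ n) ^ t) * (K * \<epsilon> ^ r)"
      using rem[of r] C[of t] assms(2) unfolding r_def
      by (intro mult_mono) (auto intro: order.trans[OF norm_ge_zero])
    also have "\<dots> = (C * K) * \<epsilon> ^ m" by (simp add: m power_add power_mult)
    finally show "norm (q ^ m) \<le> (C * K) * \<epsilon> ^ m" .
  qed
qed

lemma eq_0_if_norm_le_norm_qnil_powers:
  fixes w u x :: "'a::real_normed_algebra_1"
  assumes w: "norm_qnil w" and K: "0 \<le> K"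
    and le: "\<And>m. norm x \<le> K * (norm u ^ Suc m * norm (w ^ Suc m))"
  shows "x = 0"
proof -
  define \<epsilon> where "\<epsilon> = 1 / (2 * (norm u + 1))"
  have pu: "2 * (norm u + 1) > 0" by (simp add: add_nonneg_pos)
  have e0: "\<epsilon> > 0" unfolding \<epsilon>_def using pu by simp
  obtain C where C: "\<And>n. norm (w ^ n) \<le> C * \<epsilon> ^ n" using norm_qnilD[OF w e0] by auto
  have d: "norm u * \<epsilon> < 1" "norm u * \<epsilon> \<ge> 0" using e0 pu unfolding \<epsilon>_def by (auto simp: field_simps)
  show ?thesis
  proof (rule eq_0_if_norm_le_geometric[OF _ d(2) d(1)])
    fix m
    have "norm x \<le> K * (norm u ^ Suc m * (C * \<epsilon> ^ Suc m))"
      using le[of m] C[of "Suc m"] K by (meson mult_left_mono norm_ge_zero order.trans zero_le_power)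
    also have "\<dots> = (K * C * (norm u * \<epsilon>)) * (norm u * \<epsilon>) ^ m"
      by (simp add: power_mult_distrib mult_ac)
    finally show "norm x \<le> (K * C * (norm u * \<epsilon>)) * (norm u * \<epsilon>) ^ m" .
  qed
qed

lemma norm_qnil_add_orth:
  fixes x y :: "'a::real_normed_algebra_1"
  assumes xy: "x * y = 0" and x: "norm_qnil x" and y: "norm_qnil y"
  shows "norm_qnil (x + y)"
  unfolding norm_qnil_def
proof (intro allI impI)
  fix \<epsilon> :: real assume e: "\<epsilon> > 0"
  obtain C1 where C1: "\<And>n. norm (x ^ n) \<le> C1 * (\<epsilon> / 2) ^ n" using norm_qnilD[OF x, of "\<epsilon> / 2"] e by auto
  obtain C2 where C2: "\<And>n. norm (y ^ n) \<le> C2 * (\<epsilon> / 2) ^ n" using norm_qnilD[OF y, of "\<epsilon> / 2"] e by auto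
  have C: "1 \<le> C1" "1 \<le> C2" using power_bound_ge_one C1 C2 by blast+
  show "\<exists>C. \<forall>n. norm ((x + y) ^ n) \<le> C * \<epsilon> ^ n"
  proof (intro exI allI)
    fix m
    have "norm ((x + y) ^ m) \<le> (\<Sum>i\<le>m. norm (y ^ i * x ^ (m - i)))"
      unfolding power_add_orth[OF xy] by (rule norm_sum)
    also have "\<dots> \<le> (\<Sum>i\<le>m. (C2 * (\<epsilon> / 2) ^ i) * (C1 * (\<epsilon> / 2) ^ (m - i)))"
      by (intro sum_mono order.trans[OF norm_mult_ineq] mult_mono C1 C2) (use C e in auto)
    also have "\<dots> = real (Suc m) * (C1 * C2 * (\<epsilon> / 2) ^ m)"
      by (simp add: mult_ac flip: power_add)
    also have "\<dots> \<le> 2 ^ m * (C1 * C2 * (\<epsilon> / 2) ^ m)"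
    proof (intro mult_right_mono)
      have "Suc m \<le> 2 ^ m" using less_exp[of m] by (simp add: Suc_le_eq)
      then show "real (Suc m) \<le> 2 ^ m" by (metis of_nat_le_iff of_nat_numeral of_nat_power)
    qed (use C e in auto)
    also have "\<dots> = C1 * C2 * \<epsilon> ^ m" by (simp add: power_divide)
    finally show "norm ((x + y) ^ m) \<le> (C1 * C2) * \<epsilon> ^ m" .
  qed
qed

definition word :: "'a \<Rightarrow> 'a \<Rightarrow> bool list \<Rightarrow> 'a::monoid_mult" where
  "word a b ts = prod_list (map (\<lambda>t. if t then a else b) ts)"

definition word_comm :: "nat \<Rightarrow> 'a::ring_1 \<Rightarrow> 'a \<Rightarrow> bool" where
  "word_comm k a b \<longleftrightarrow> (\<forall>ts. length ts = k \<longrightarrow> word a b ts * a * b = word a b ts * b * a)"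

lemma word_Nil [simp]: "word a b [] = 1"
  and word_Cons: "word a b (t # ts) = (if t then a else b) * word a b ts"
  and word_append: "word a b (ts @ us) = word a b ts * word a b us"
  and word_replicate: "word a b (replicate i True @ replicate l False) = a ^ i * b ^ l"
  by (simp_all add: word_def)

lemma word_snoc: "word a b (ts @ [t]) = word a b ts * (if t then a else b)"
  by (simp add: word_append word_Cons)

lemma word_comm_swap: "word_comm k a b \<Longrightarrow> word_comm k b a"
proof -
  have "word b a ts = word a b (map Not ts)" for ts :: "bool list"
    by (induction ts) (auto simp: word_Cons)
  then show "word_comm k a b \<Longrightarrow> word_comm k b a"
    unfolding word_comm_def by (metis length_map)
qed

lemma word_comm_0: "a * b = b * a \<Longrightarrow> word_comm 0 a b"
  unfolding word_comm_def by simp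

lemma word_comm_longer:
  assumes "word_comm k a b" "k \<le> length ts"
  shows "word a b ts * a * b = word a b ts * b * a"
proof -
  let ?us = "take (length ts - k) ts" and ?vs = "drop (length ts - k) ts"
  have "word a b ?vs * a * b = word a b ?vs * b * a"
    using assms unfolding word_comm_def by simp
  moreover have "word a b ts = word a b ?us * word a b ?vs"
    by (metis append_take_drop_id word_append)
  ultimately show ?thesis by (simp add: mult.assoc)
qed

text \<open>Expanding \<open>(a + b) ^ k\<close> turns each term into a word of length at least \<open>k\<close>.\<close>

lemma word_comm_after_power:
  assumes "word_comm k a b"
  shows "(a + b) ^ k * word a b ts * a * b = (a + b) ^ k * word a b ts * b * a"
proof -
  have "word a b us * (a + b) ^ m * word a b ts * a * b = word a b us * (a + b) ^ m * word a b ts * b * a"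
    if "k \<le> length us + m" for us m
    using that
  proof (induction m arbitrary: us)
    case 0
    then show ?case using word_comm_longer[OF assms, of "us @ ts"] by (simp add: word_append)
  next
    case (Suc m)
    have split: "word a b us * (a + b) ^ Suc m =
        word a b (us @ [True]) * (a + b) ^ m + word a b (us @ [False]) * (a + b) ^ m"
      by (simp add: word_snoc algebra_simps)
    show ?case
      unfolding split using Suc.IH[of "us @ [True]"] Suc.IH[of "us @ [False]"] Suc.prems
      by (simp add: algebra_simps)
  qed
  from this[of "[]" k] show ?thesis by simp
qed

lemma word_reorder:
  assumes comm: "\<And>ts. u * word a b ts * a * b = u * word a b ts * b * a"
  shows "u * word a b ts = u * a ^ length (filter (\<lambda>t. t) ts) * b ^ length (filter Not ts)"
proof (induction ts rule: rev_induct)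
  case (snoc t ts)
  let ?i = "length (filter (\<lambda>t. t) ts)" and ?l = "length (filter Not ts)"
  have swap: "u * a ^ i * b ^ l * a = u * a ^ Suc i * b ^ l" for i l
  proof (induction l)
    case (Suc l)
    have "u * a ^ i * b ^ Suc l * a = u * word a b (replicate i True @ replicate l False) * b * a"
      by (simp add: word_replicate mult.assoc power_commutes)
    also have "\<dots> = u * word a b (replicate i True @ replicate l False) * a * b"
      using comm by metis
    also have "\<dots> = u * a ^ Suc i * b ^ Suc l"
      using Suc by (simp add: word_replicate mult.assoc power_commutes)
    finally show ?case .
  qed (simp add: mult.assoc power_commutes)
  have snoc_eq: "u * word a b (ts @ [t]) = u * a ^ ?i * b ^ ?l * (if t then a else b)"
    using snoc by (simp add: word_snoc mult.assoc[symmetric])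
  show ?case
  proof (cases t)
    case True
    then show ?thesis using snoc_eq by (simp add: swap)
  next
    case False
    then show ?thesis using snoc_eq by (simp add: mult.assoc power_Suc2 del: power_Suc)
  qed
qed simp

lemma norm_word_comm_power_le:
  fixes a b u :: "'a::real_normed_algebra_1"
  assumes comm: "\<And>ts. u * word a b ts * a * b = u * word a b ts * b * a"
    and a: "\<And>n. norm (a ^ n) \<le> C1 * \<delta> ^ n" and b: "\<And>n. norm (b ^ n) \<le> C2 * \<delta> ^ n"
    and "0 \<le> \<delta>"
  shows "norm (u * word a b ts * (a + b) ^ j) \<le> 2 ^ j * (norm u * C1 * C2 * \<delta> ^ (length ts + j))"
proof (induction j arbitrary: ts)
  case 0
  let ?i = "length (filter (\<lambda>t. t) ts)" and ?l = "length (filter Not ts)"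
  have C: "0 \<le> C1" "0 \<le> C2" using power_bound_ge_one a b by fastforce+
  have "norm (u * word a b ts) \<le> norm u * norm (a ^ ?i) * norm (b ^ ?l)"
    unfolding word_reorder[OF comm] by (rule norm_mult3_le)
  also have "\<dots> \<le> norm u * (C1 * \<delta> ^ ?i) * (C2 * \<delta> ^ ?l)"
    by (intro mult_mono mult_left_mono a b) (use C \<open>0 \<le> \<delta>\<close> in auto)
  also have "\<dots> = norm u * C1 * C2 * \<delta> ^ length ts"
    by (simp add: sum_length_filter_compl[of "\<lambda>t. t" ts, symmetric] power_add mult_ac)
  finally show ?case by simp
next
  case (Suc j)
  have split: "u * word a b ts * (a + b) ^ Suc j =
      u * word a b (ts @ [True]) * (a + b) ^ j + u * word a b (ts @ [False]) * (a + b) ^ j"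
    by (simp add: word_snoc algebra_simps)
  show ?case
    unfolding split
    using norm_triangle_le[OF add_mono[OF Suc.IH[of "ts @ [True]"] Suc.IH[of "ts @ [False]"]]]
    by (simp add: mult_ac)
qed

lemma norm_qnil_add_word_comm:
  fixes a b :: "'a::real_normed_algebra_1"
  assumes ab: "word_comm k a b" and a: "norm_qnil a" and b: "norm_qnil b"
  shows "norm_qnil (a + b)"
proof (rule norm_qnil_shift[where j = k])
  fix \<epsilon> :: real assume e: "\<epsilon> > 0"
  obtain C1 where C1: "\<And>n. norm (a ^ n) \<le> C1 * (\<epsilon> / 2) ^ n" using norm_qnilD[OF a, of "\<epsilon> / 2"] e by auto
  obtain C2 where C2: "\<And>n. norm (b ^ n) \<le> C2 * (\<epsilon> / 2) ^ n" using norm_qnilD[OF b, of "\<epsilon> / 2"] e by auto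
  define u where "u = (a + b) ^ k"
  show "\<exists>C. \<forall>m. norm ((a + b) ^ (m + k)) \<le> C * \<epsilon> ^ m"
  proof (intro exI allI)
    fix m
    have "norm ((a + b) ^ (m + k)) = norm (u * word a b [] * (a + b) ^ m)"
      by (simp only: u_def add.commute[of m k] power_add word_Nil mult_1_right)
    also have "\<dots> \<le> 2 ^ m * (norm u * C1 * C2 * (\<epsilon> / 2) ^ m)"
      using norm_word_comm_power_le[OF word_comm_after_power[OF ab] C1 C2, of "[]" m] e
      unfolding u_def by simp
    also have "\<dots> = (norm u * C1 * C2) * \<epsilon> ^ m" by (simp add: power_divide)
    finally show "norm ((a + b) ^ (m + k)) \<le> (norm u * C1 * C2) * \<epsilon> ^ m" .
  qed
qed

lemma norm_qnil_add: "norm_qnil a \<Longrightarrow> norm_qnil b \<Longrightarrow> commute a b \<Longrightarrow> norm_qnil (a + b)"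
  using norm_qnil_add_word_comm[OF word_comm_0] by (blast dest: commuteD)

lemma norm_qnil_diff: "norm_qnil a \<Longrightarrow> norm_qnil b \<Longrightarrow> commute a b \<Longrightarrow> norm_qnil (a - b)"
  using norm_qnil_add[of a "- b"] norm_qnil_minus[of b] by (simp add: commute_minus_right)

lemma norm_qnil_add_cancel: "commute x q \<Longrightarrow> norm_qnil q \<Longrightarrow> norm_qnil (x + q) \<longleftrightarrow> norm_qnil x"
  using norm_qnil_add norm_qnil_diff[of "x + q" q] by (auto intro: commute_intros)

lemma summable_norm_le_half_power:
  fixes f :: "nat \<Rightarrow> 'a::banach"
  assumes "\<And>n. norm (f n) \<le> K * (1 / 2) ^ n"
  shows "summable (\<lambda>n. norm (f n))" "summable f"
proof -
  show s: "summable (\<lambda>n. norm (f n))"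
    by (rule summable_comparison_test'[where N = 0, OF summable_mult[OF summable_geometric]])
      (use assms in auto)
  show "summable f" by (rule summable_norm_cancel[OF s])
qed

lemma norm_qnil_neumann:
  fixes v :: "'a::{real_normed_algebra_1,banach}"
  assumes "norm_qnil v"
  shows "(1 - v) * (\<Sum>n. v ^ n) = 1" "(\<Sum>n. v ^ n) * (1 - v) = 1"
proof -
  obtain C where "\<And>n. norm (v ^ n) \<le> C * (1 / 2) ^ n" using norm_qnilD[OF assms, of "1 / 2"] by auto
  then have s: "summable (\<lambda>n. v ^ n)" by (rule summable_norm_le_half_power)
  have t: "(\<lambda>n. v ^ n - v ^ Suc n) sums 1"
    using telescope_sums'[OF summable_LIMSEQ_zero[OF s]] by simp
  have "(1 - v) * (\<Sum>n. v ^ n) = (\<Sum>n. (1 - v) * v ^ n)" by (rule suminf_mult[OF s, symmetric])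
  also have "\<dots> = (\<Sum>n. v ^ n - v ^ Suc n)" by (simp add: algebra_simps)
  finally show "(1 - v) * (\<Sum>n. v ^ n) = 1" using sums_unique[OF t] by simp
  have "(\<Sum>n. v ^ n) * (1 - v) = (\<Sum>n. v ^ n * (1 - v))" by (rule suminf_mult2[OF s])
  also have "\<dots> = (\<Sum>n. v ^ n - v ^ Suc n)" by (simp add: algebra_simps power_commutes)
  finally show "(\<Sum>n. v ^ n) * (1 - v) = 1" using sums_unique[OF t] by simp
qed

lemma invertible_el_mult: "invertible_el x \<Longrightarrow> invertible_el y \<Longrightarrow> invertible_el (x * y)"
  unfolding invertible_el_def by (metis mult.assoc mult_1_left)

lemma invertible_el_one_minus_norm_qnil:
  fixes v :: "'a::{real_normed_algebra_1,banach}"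
  shows "norm_qnil v \<Longrightarrow> invertible_el (1 - v)"
  unfolding invertible_el_def using norm_qnil_neumann by blast

lemma invertible_el_one_plus_norm_qnil:
  fixes v :: "'a::{real_normed_algebra_1,banach}"
  shows "norm_qnil v \<Longrightarrow> invertible_el (1 + v)"
  using invertible_el_one_minus_norm_qnil[OF norm_qnil_minus, of v] by simp

lemma norm_qnil_not_invertible_el:
  fixes v :: "'a::real_normed_algebra_1"
  assumes "norm_qnil v"
  shows "\<not> invertible_el v"
proof
  assume "invertible_el v"
  then obtain w where w: "v * w = 1" unfolding invertible_el_def by blast
  have "(1::'a) = 0"
  proof (rule eq_0_if_norm_le_norm_qnil_powers[OF assms, where u = w and K = 1])
    fix m
    have "norm (1::'a) = norm (v ^ Suc m * w ^ Suc m)" by (simp only: left_right_inverse_power[OF w])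
    also have "\<dots> \<le> norm (v ^ Suc m) * norm w ^ Suc m" by (rule norm_mult_power_le)
    finally show "norm (1::'a) \<le> 1 * (norm w ^ Suc m * norm (v ^ Suc m))" by (simp add: mult.commute)
  qed simp
  then show False by simp
qed

section \<open>Quasinilpotent elements are norm-quasinilpotent\<close>

lemma scaleC_zero_left [simp]: "scaleC 0 (x::'a::complex_banach_algebra_1) = 0"
  using scaleC_of_real[of 0 x] by simp

lemma scaleC_minus_left: "scaleC (- c) (x::'a::complex_banach_algebra_1) = - scaleC c x"
  using scaleC_add_left[of "- c" c x] by (simp add: eq_neg_iff_add_eq_0)

lemma scaleC_diff_left: "scaleC (c - d) (x::'a::complex_banach_algebra_1) = scaleC c x - scaleC d x"
  using scaleC_add_left[of c "- d" x] scaleC_minus_left[of d x] by simp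

lemma scaleC_diff_right: "scaleC c ((x::'a::complex_banach_algebra_1) - y) = scaleC c x - scaleC c y"
  by (metis add_diff_cancel diff_add_cancel scaleC_add_right)

lemma scaleC_sum_left: "scaleC (\<Sum>i\<in>A. f i) (x::'a::complex_banach_algebra_1) = (\<Sum>i\<in>A. scaleC (f i) x)"
  by (induction A rule: infinite_finite_induct) (simp_all add: scaleC_add_left)

lemma scaleC_power: "(scaleC c (x::'a::complex_banach_algebra_1)) ^ n = scaleC (c ^ n) (x ^ n)"
  by (induction n) (simp_all add: scaleC_one mult_scaleC_left mult_scaleC_right scaleC_scaleC mult.commute)

lemma scaleC_of_nat_one: "scaleC (of_nat n) (1::'a::complex_banach_algebra_1) = of_nat n"
  using scaleC_of_real[of "real n" "1::'a"] by (simp add: scaleR_conv_of_real)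

lemma scaleC_one_mult: "scaleC c 1 * x = scaleC c (x::'a::complex_banach_algebra_1)"
  by (simp add: mult_scaleC_left)

lemma invertible_el_scaleC_one: "c \<noteq> 0 \<Longrightarrow> invertible_el (scaleC c (1::'a::complex_banach_algebra_1))"
  unfolding invertible_el_def
  by (rule exI[of _ "scaleC (1 / c) 1"]) (simp add: mult_scaleC_left scaleC_scaleC scaleC_one)

lemma invertible_el_scaleC_diff_iff:
  fixes q :: "'a::complex_banach_algebra_1"
  assumes "z \<noteq> 0"
  shows "invertible_el (scaleC z 1 - q) \<longleftrightarrow> invertible_el (1 - scaleC (1 / z) q)"
proof
  assume "invertible_el (scaleC z 1 - q)"
  from invertible_el_mult[OF invertible_el_scaleC_one this, of "1 / z"]
  show "invertible_el (1 - scaleC (1 / z) q)"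
    using assms by (simp add: scaleC_one_mult scaleC_diff_right scaleC_scaleC scaleC_one)
next
  assume "invertible_el (1 - scaleC (1 / z) q)"
  from invertible_el_mult[OF invertible_el_scaleC_one this, of z]
  show "invertible_el (scaleC z 1 - q)"
    using assms by (simp add: scaleC_one_mult scaleC_diff_right scaleC_scaleC scaleC_one)
qed

lemma quasinilpotent_if_norm_qnil:
  fixes q :: "'a::complex_banach_algebra_1"
  assumes q: "norm_qnil q"
  shows "quasinilpotent q"
  unfolding quasinilpotent_def spectrum_el_def
proof (intro set_eqI iffI)
  fix z assume z: "z \<in> {z. \<not> invertible_el (scaleC z 1 - q)}"
  have "commute (scaleC (1 / z) 1) q" unfolding commute_def by (simp add: mult_scaleC_left mult_scaleC_right)
  from norm_qnil_mult_left[OF q this] have "norm_qnil (scaleC (1 / z) q)"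
    by (simp add: scaleC_one_mult)
  then have "z \<noteq> 0 \<Longrightarrow> invertible_el (scaleC z 1 - q)"
    by (simp add: invertible_el_scaleC_diff_iff invertible_el_one_minus_norm_qnil)
  then show "z \<in> {0}" using z by auto
next
  fix z assume "z \<in> {0::complex}"
  then show "z \<in> {z. \<not> invertible_el (scaleC z 1 - q)}"
    using norm_qnil_not_invertible_el[OF norm_qnil_minus[OF q]] by simp
qed

definition inv_el :: "'a::ring_1 \<Rightarrow> 'a" where
  "inv_el x = (SOME y. x * y = 1 \<and> y * x = 1)"

lemma inv_el: "invertible_el x \<Longrightarrow> x * inv_el x = 1 \<and> inv_el x * x = 1"
  unfolding invertible_el_def inv_el_def by (rule someI_ex)

definition resolvent :: "'a::complex_banach_algebra_1 \<Rightarrow> complex \<Rightarrow> 'a" where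
  "resolvent q z = inv_el (1 - scaleC z q)"

lemma invertible_el_one_minus_scaleC:
  fixes q :: "'a::complex_banach_algebra_1"
  assumes "quasinilpotent q"
  shows "invertible_el (1 - scaleC z q)"
proof (cases "z = 0")
  case True
  then show ?thesis unfolding invertible_el_def by (intro exI[of _ 1]) simp
next
  case False
  then have "1 / z \<notin> spectrum_el q" using assms unfolding quasinilpotent_def by simp
  with False show ?thesis
    unfolding spectrum_el_def using invertible_el_scaleC_diff_iff[of "1 / z" q] by simp
qed

lemma resolvent_inverse:
  fixes q :: "'a::complex_banach_algebra_1"
  assumes "quasinilpotent q"
  shows "(1 - scaleC z q) * resolvent q z = 1" "resolvent q z * (1 - scaleC z q) = 1"
  using inv_el[OF invertible_el_one_minus_scaleC[OF assms]] unfolding resolvent_def by auto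

lemma norm_resolvent_diff_le:
  fixes q :: "'a::complex_banach_algebra_1"
  assumes qn: "quasinilpotent q"
  shows "norm (resolvent q z - resolvent q w) \<le> cmod (z - w) * (norm (resolvent q z) * norm q * norm (resolvent q w))"
proof -
  let ?R = "resolvent q"
  have "?R z * ((1 - scaleC w q) - (1 - scaleC z q)) * ?R w =
      ?R z * ((1 - scaleC w q) * ?R w) - (?R z * (1 - scaleC z q)) * ?R w"
    by (simp add: algebra_simps)
  also have "\<dots> = ?R z - ?R w" by (simp only: resolvent_inverse[OF qn] mult_1_left mult_1_right)
  finally have diff: "?R z - ?R w = ?R z * scaleC (z - w) q * ?R w" by (simp add: scaleC_diff_left)
  have "norm (?R z - ?R w) \<le> norm (?R z) * norm (scaleC (z - w) q) * norm (?R w)"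
    unfolding diff by (rule norm_mult3_le)
  then show ?thesis by (simp add: norm_scaleC mult_ac)
qed

lemma isCont_resolvent:
  fixes q :: "'a::complex_banach_algebra_1"
  assumes qn: "quasinilpotent q"
  shows "isCont (resolvent q) z"
  unfolding isCont_def LIM_eq
proof (intro allI impI)
  fix r :: real assume r: "r > 0"
  let ?R = "resolvent q"
  define c where "c = norm (?R z) + 1"
  define d where "d = norm q + 1"
  have c: "c \<ge> 1" "norm (?R z) \<le> c" unfolding c_def by simp_all
  have d: "d \<ge> 1" "norm q \<le> d" unfolding d_def by simp_all
  define s where "s = min (1 / (2 * c * d)) (r / (4 * c * c * d))"
  have s0: "s > 0" unfolding s_def using c d r by simp
  show "\<exists>s>0. \<forall>w. w \<noteq> z \<and> norm (w - z) < s \<longrightarrow> norm (?R w - ?R z) < r"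
  proof (intro exI[of _ s] conjI allI impI s0)
    fix w assume w: "w \<noteq> z \<and> norm (w - z) < s"
    have "cmod (w - z) * norm q * norm (?R z) \<le> s * d * c"
      using w c d s0 by (intro mult_mono) auto
    also have "\<dots> \<le> 1 / (2 * c * d) * d * c" unfolding s_def using c d
      by (intro mult_right_mono) auto
    finally have small: "cmod (w - z) * norm q * norm (?R z) \<le> 1 / 2" using c d by simp
    have "norm (?R w) \<le> norm (?R z) + norm (?R w - ?R z)"
      by (rule norm_triangle_sub)
    also have "norm (?R w - ?R z) \<le> (cmod (w - z) * norm q * norm (?R z)) * norm (?R w)"
      using norm_resolvent_diff_le[OF qn, of w z] by (simp add: mult_ac)
    also have "\<dots> \<le> 1 / 2 * norm (?R w)" by (intro mult_right_mono small) simp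
    finally have Rw: "norm (?R w) \<le> 2 * c" using c by simp
    have "norm (?R w - ?R z) \<le> cmod (w - z) * (norm (?R w) * norm q * norm (?R z))"
      by (rule norm_resolvent_diff_le[OF qn])
    also have "\<dots> \<le> cmod (w - z) * ((2 * c) * d * c)"
      using Rw c d by (intro mult_left_mono mult_mono) auto
    also have "\<dots> < s * (2 * c * d * c)"
      using w c d by (intro mult_strict_right_mono) auto
    also have "\<dots> \<le> (r / (4 * c * c * d)) * (2 * c * d * c)" unfolding s_def using c d
      by (intro mult_right_mono) auto
    also have "\<dots> < r" using c d r by (simp add: field_simps)
    finally show "norm (?R w - ?R z) < r" .
  qed
qed

lemma resolvent_bounded:
  fixes q :: "'a::complex_banach_algebra_1"
  assumes "quasinilpotent q"
  obtains M where "\<And>z. cmod z \<le> \<rho> \<Longrightarrow> norm (resolvent q z) \<le> M"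
proof -
  have "continuous_on (cball 0 \<rho>) (resolvent q)"
    using isCont_resolvent[OF assms] by (blast intro: continuous_at_imp_continuous_on)
  then have "bounded (resolvent q ` cball 0 \<rho>)"
    by (intro compact_imp_bounded compact_continuous_image) simp_all
  then obtain M where "\<forall>y\<in>resolvent q ` cball 0 \<rho>. norm y \<le> M" unfolding bounded_iff by blast
  then show ?thesis by (intro that) auto
qed

definition root_unity :: "nat \<Rightarrow> complex" where
  "root_unity n = cis (2 * pi / real n)"

lemma root_unity_power_eq_1: "0 < n \<Longrightarrow> root_unity n ^ n = 1"
  unfolding root_unity_def Complex.DeMoivre by simp

lemma norm_root_unity_power [simp]: "cmod (root_unity n ^ j) = 1"
  unfolding root_unity_def by (simp add: norm_power)

lemma sum_root_unity_powers:
  assumes n: "0 < n" and m: "m < n"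
  shows "(\<Sum>j<n. (root_unity n ^ j) ^ m) = (if m = 0 then of_nat n else 0)"
proof (cases "m = 0")
  case False
  define x where "x = root_unity n ^ m"
  have "x \<noteq> 1"
  proof
    assume "x = 1"
    then have "cis (2 * pi * real m / real n) = cis (2 * pi * real 0 / real n)"
      unfolding x_def root_unity_def Complex.DeMoivre by (simp add: field_simps)
    with inj_onD[OF bij_betw_imp_inj_on[OF Complex.bij_betw_roots_unity[OF n]]] m False show False by auto
  qed
  moreover have "x ^ n = 1"
    unfolding x_def power_mult[symmetric] mult.commute[of m n] power_mult root_unity_power_eq_1[OF n] by simp
  moreover have "(\<Sum>j<n. (root_unity n ^ j) ^ m) = (\<Sum>j<n. x ^ j)"
    unfolding x_def by (simp add: power_mult[symmetric] mult.commute)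
  ultimately show ?thesis using False by (simp add: geometric_sum)
qed simp

definition resolvent_avg :: "'a::complex_banach_algebra_1 \<Rightarrow> nat \<Rightarrow> complex \<Rightarrow> 'a" where
  "resolvent_avg q n z = scaleC (1 / of_nat n) (\<Sum>j<n. resolvent q (root_unity n ^ j * z))"

text \<open>Averaging \<open>(1 - w q)\<^sup>-\<^sup>1\<close> over the \<open>n\<close>-th roots \<open>w\<close> of \<open>z\<^sup>n\<close> gives \<open>(1 - z\<^sup>n q\<^sup>n)\<^sup>-\<^sup>1\<close>:
  in \<open>(1 - w q)\<^sup>-\<^sup>1 (1 - z\<^sup>n q\<^sup>n) = \<Sum>m<n. w\<^sup>m q\<^sup>m\<close> all terms with \<open>0 < m\<close> average out.\<close>

lemma resolvent_avg_left_inverse: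
  fixes q :: "'a::complex_banach_algebra_1"
  assumes qn: "quasinilpotent q" and n: "0 < n"
  shows "resolvent_avg q n z * (1 - scaleC (z ^ n) (q ^ n)) = 1"
proof -
  define Y where "Y = 1 - scaleC (z ^ n) (q ^ n)"
  define S where "S j = (\<Sum>m<n. scaleC ((root_unity n ^ j * z) ^ m) (q ^ m))" for j
  have RY: "resolvent q (root_unity n ^ j * z) * Y = S j" for j
  proof -
    define w where "w = root_unity n ^ j * z"
    have wn: "w ^ n = z ^ n" unfolding w_def
      by (simp add: power_mult_distrib flip: power_mult)
        (simp add: mult.commute[of j n] power_mult root_unity_power_eq_1[OF n])
    have "(1 - scaleC w q) * S j = 1 - (scaleC w q) ^ n"
      unfolding S_def w_def[symmetric] scaleC_power[symmetric] by (rule one_diff_power_eq_ring(1))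
    also have "\<dots> = Y" unfolding Y_def scaleC_power wn ..
    finally have "(1 - scaleC w q) * S j = Y" .
    then have "resolvent q w * Y = (resolvent q w * (1 - scaleC w q)) * S j" by (simp add: mult.assoc)
    then show ?thesis unfolding w_def by (simp only: resolvent_inverse(2)[OF qn] mult_1_left)
  qed
  have "(\<Sum>j<n. S j) = (\<Sum>m<n. scaleC ((\<Sum>j<n. (root_unity n ^ j) ^ m) * z ^ m) (q ^ m))"
    unfolding S_def by (subst sum.swap) (simp add: power_mult_distrib scaleC_sum_left sum_distrib_right)
  also have "\<dots> = (\<Sum>m<n. if m = 0 then of_nat n else 0)"
    by (intro sum.cong refl) (simp add: sum_root_unity_powers[OF n] scaleC_of_nat_one)
  also have "\<dots> = of_nat n" using n by (simp add: sum.delta')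
  finally have sumS: "(\<Sum>j<n. S j) = of_nat n" .
  have "resolvent_avg q n z * Y = scaleC (1 / of_nat n) (\<Sum>j<n. S j)"
    unfolding resolvent_avg_def by (simp add: mult_scaleC_left sum_distrib_right RY)
  also have "\<dots> = 1"
    unfolding sumS scaleC_of_nat_one[symmetric] scaleC_scaleC using n by (simp add: scaleC_one)
  finally show ?thesis unfolding Y_def .
qed

lemma norm_resolvent_avg_diff_le:
  fixes q :: "'a::complex_banach_algebra_1"
  assumes qn: "quasinilpotent q" and M: "\<And>z. cmod z \<le> \<rho> \<Longrightarrow> norm (resolvent q z) \<le> M"
    and n: "0 < n" and z: "cmod z \<le> \<rho>" and w: "cmod w \<le> \<rho>"
  shows "norm (resolvent_avg q n z - resolvent_avg q n w) \<le> cmod (z - w) * (M * M * norm q)"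
proof -
  let ?R = "resolvent q" and ?\<omega> = "\<lambda>j. root_unity n ^ j"
  have M0: "0 \<le> M" using M[OF z] by (meson norm_ge_zero order.trans)
  have each: "norm (?R (?\<omega> j * z) - ?R (?\<omega> j * w)) \<le> cmod (z - w) * (M * M * norm q)" for j
  proof -
    have "norm (?R (?\<omega> j * z) - ?R (?\<omega> j * w)) \<le>
        cmod (?\<omega> j * z - ?\<omega> j * w) * (norm (?R (?\<omega> j * z)) * norm q * norm (?R (?\<omega> j * w)))"
      by (rule norm_resolvent_diff_le[OF qn])
    also have "\<dots> \<le> cmod (z - w) * (M * norm q * M)"
      using M[of "?\<omega> j * z"] M[of "?\<omega> j * w"] z w M0
      by (intro mult_mono) (auto simp: norm_mult simp flip: right_diff_distrib)
    finally show ?thesis by (simp add: mult_ac)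
  qed
  have "resolvent_avg q n z - resolvent_avg q n w =
      scaleC (1 / of_nat n) (\<Sum>j<n. ?R (?\<omega> j * z) - ?R (?\<omega> j * w))"
    unfolding resolvent_avg_def by (simp add: scaleC_diff_right sum_subtractf)
  then have "norm (resolvent_avg q n z - resolvent_avg q n w) =
      1 / real n * norm (\<Sum>j<n. ?R (?\<omega> j * z) - ?R (?\<omega> j * w))"
    by (simp add: norm_scaleC norm_divide)
  also have "\<dots> \<le> 1 / real n * (\<Sum>j<n. cmod (z - w) * (M * M * norm q))"
    by (intro mult_left_mono order.trans[OF norm_sum] sum_mono each) simp
  also have "\<dots> = cmod (z - w) * (M * M * norm q)" using n by simp
  finally show ?thesis .
qed

definition bounded_scaled_powers :: "'a::real_normed_algebra_1 \<Rightarrow> real \<Rightarrow> bool" where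
  "bounded_scaled_powers q s \<longleftrightarrow> (\<exists>K. \<forall>m. s ^ m * norm (q ^ m) \<le> K)"

lemma bounded_scaled_powers_small:
  assumes "0 \<le> s" "s * norm q \<le> 1"
  shows "bounded_scaled_powers q s"
  unfolding bounded_scaled_powers_def
proof (intro exI allI)
  fix m
  have "s ^ m * norm (q ^ m) \<le> s ^ m * norm q ^ m"
    using assms by (intro mult_left_mono norm_power_ineq) auto
  also have "\<dots> \<le> 1" using assms by (simp add: power_le_one flip: power_mult_distrib)
  finally show "s ^ m * norm (q ^ m) \<le> 1" .
qed

lemma bounded_scaled_powers_eventually:
  assumes "0 \<le> s" "eventually (\<lambda>m. s ^ m * norm (q ^ m) \<le> 1) sequentially"
  shows "bounded_scaled_powers q s"
proof -
  obtain N where N: "\<And>m. N \<le> m \<Longrightarrow> s ^ m * norm (q ^ m) \<le> 1"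
    using assms(2) unfolding eventually_sequentially by blast
  have "s ^ m * norm (q ^ m) \<le> 1 + (\<Sum>i<N. s ^ i * norm (q ^ i))" for m
  proof (cases "m < N")
    case True
    then have "s ^ m * norm (q ^ m) \<le> (\<Sum>i<N. s ^ i * norm (q ^ i))"
      using assms(1) by (intro member_le_sum) auto
    then show ?thesis by simp
  next
    case False
    have "0 \<le> (\<Sum>i<N. s ^ i * norm (q ^ i))" using assms(1) by (intro sum_nonneg) simp
    then show ?thesis using N[of m] False by simp
  qed
  then show ?thesis unfolding bounded_scaled_powers_def by blast
qed

lemma eventually_scaled_powers_small:
  assumes "bounded_scaled_powers q s" "0 \<le> s'" "s' < s" "0 < c"
  shows "eventually (\<lambda>m. s' ^ m * norm (q ^ m) \<le> c) sequentially"
proof -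
  obtain K where K: "\<And>m. s ^ m * norm (q ^ m) \<le> K" using assms(1) unfolding bounded_scaled_powers_def by blast
  have "(\<lambda>m. K * (s' / s) ^ m) \<longlonglongrightarrow> K * 0"
    by (intro tendsto_mult tendsto_const LIMSEQ_power_zero) (use assms in auto)
  then have "eventually (\<lambda>m. K * (s' / s) ^ m < c) sequentially"
    using assms(4) by (intro order_tendstoD) auto
  then show ?thesis
  proof (rule eventually_mono)
    fix m assume m: "K * (s' / s) ^ m < c"
    have "s' ^ m * norm (q ^ m) = (s' / s) ^ m * (s ^ m * norm (q ^ m))"
      using assms(2,3) by (simp add: power_divide)
    also have "\<dots> \<le> (s' / s) ^ m * K" using assms K by (intro mult_left_mono) auto
    finally show "s' ^ m * norm (q ^ m) \<le> c" using m by (simp add: mult.commute)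
  qed
qed

lemma left_inverse_near_one:
  fixes a v :: "'a::real_normed_algebra_1"
  assumes av: "a * (1 - v) = 1" and v: "norm v \<le> 1 / 8"
  shows "norm (a - 1) \<le> 1 / 4"
proof -
  have a1: "a - 1 = a * v" using av by (simp add: algebra_simps)
  have "norm a \<le> 1 + norm (a - 1)" using norm_triangle_ineq[of 1 "a - 1"] by simp
  also have "norm (a - 1) \<le> norm a * (1 / 8)"
    unfolding a1 by (rule order.trans[OF norm_mult_ineq mult_left_mono[OF v norm_ge_zero]])
  finally have "norm a \<le> 8 / 7" by simp
  then have "norm a * norm v \<le> 8 / 7 * (1 / 8)" using v by (intro mult_mono) auto
  then show ?thesis unfolding a1 using norm_mult_ineq[of a v] by simp
qed

lemma right_factor_near_one:
  fixes a y :: "'a::real_normed_algebra_1"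
  assumes ay: "a * y = 1" and a: "norm (a - 1) \<le> 1 / 2"
  shows "norm (1 - y) \<le> 1"
proof -
  have y1: "1 - y = (a - 1) * y" using ay by (simp add: algebra_simps)
  have "norm y \<le> 1 + norm (1 - y)" using norm_triangle_ineq4[of 1 "1 - y"] by simp
  also have "norm (1 - y) \<le> 1 / 2 * norm y"
    unfolding y1 by (rule order.trans[OF norm_mult_ineq mult_right_mono[OF a norm_ge_zero]])
  finally have "norm y \<le> 2" by simp
  then have "norm (a - 1) * norm y \<le> 1 / 2 * 2" using a by (intro mult_mono) auto
  then show ?thesis unfolding y1 using norm_mult_ineq[of "a - 1" y] by simp
qed

text \<open>If \<open>s'\<^sup>m \<parallel>q\<^sup>m\<parallel>\<close> is small, the resolvent average at \<open>s'\<close> is close to \<open>1\<close>, hence so is the one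
  at a nearby \<open>s\<close>, and then \<open>s\<^sup>m \<parallel>q\<^sup>m\<parallel> \<le> 1\<close>.  The admissible distance \<open>\<delta>\<close> depends only on a
  Lipschitz constant of the resolvent, not on \<open>m\<close>.\<close>

lemma scaled_power_le_one_nearby:
  fixes q :: "'a::complex_banach_algebra_1"
  assumes qn: "quasinilpotent q" and M: "\<And>z. cmod z \<le> \<rho> \<Longrightarrow> norm (resolvent q z) \<le> M"
    and \<delta>: "(M * M * norm q) * \<delta> \<le> 1 / 4"
    and s: "0 \<le> s'" "s' \<le> s" "s \<le> \<rho>" "s - s' \<le> \<delta>"
    and m: "0 < m" and small: "s' ^ m * norm (q ^ m) \<le> 1 / 8"
  shows "s ^ m * norm (q ^ m) \<le> 1"
proof -
  let ?A = "resolvent_avg q m" and ?L = "M * M * norm q"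
  have "cmod 0 \<le> \<rho>" using s by simp
  from M[OF this] have M0: "0 \<le> M" by (meson norm_ge_zero order.trans)
  have "norm (?A (of_real s') - 1) \<le> 1 / 4"
    by (rule left_inverse_near_one[OF resolvent_avg_left_inverse[OF qn m]])
      (use s small in \<open>simp add: norm_scaleC norm_power\<close>)
  moreover have "norm (?A (of_real s) - ?A (of_real s')) \<le> cmod (of_real s - of_real s') * ?L"
    by (rule norm_resolvent_avg_diff_le[OF qn M m]) (use s in auto)
  moreover have "cmod (of_real s - of_real s') * ?L = (s - s') * ?L"
    using s by (simp flip: of_real_diff)
  moreover have "(s - s') * ?L \<le> 1 / 4"
    using mult_left_mono[OF s(4), of ?L] \<delta> M0 by (simp add: mult.commute)
  ultimately have "norm (?A (of_real s) - 1) \<le> 1 / 2"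
    using norm_triangle_ineq[of "?A (of_real s) - ?A (of_real s')" "?A (of_real s') - 1"] by simp
  from right_factor_near_one[OF resolvent_avg_left_inverse[OF qn m] this]
  show ?thesis using s by (simp add: norm_scaleC norm_power)
qed

lemma bounded_scaled_powers_step:
  fixes q :: "'a::complex_banach_algebra_1"
  assumes qn: "quasinilpotent q" and M: "\<And>z. cmod z \<le> \<rho> \<Longrightarrow> norm (resolvent q z) \<le> M"
    and \<delta>: "0 < \<delta>" "(M * M * norm q) * \<delta> \<le> 1 / 4"
    and r: "0 < r" "\<And>s'. 0 \<le> s' \<Longrightarrow> s' < r \<Longrightarrow> bounded_scaled_powers q s'"
    and s: "0 \<le> s" "s \<le> \<rho>" "s < r + \<delta>"
  shows "bounded_scaled_powers q s"
proof -
  define s' where "s' = max 0 (s - \<delta>)"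
  have s': "0 \<le> s'" "s' < r" "s' \<le> s" "s - s' \<le> \<delta>" unfolding s'_def using s r \<delta> by auto
  have "bounded_scaled_powers q ((s' + r) / 2)" using r s' by simp
  then have "eventually (\<lambda>m. s' ^ m * norm (q ^ m) \<le> 1 / 8) sequentially"
    by (rule eventually_scaled_powers_small) (use s' in auto)
  then have "eventually (\<lambda>m. s ^ m * norm (q ^ m) \<le> 1) sequentially"
    using eventually_gt_at_top[of 0]
    by eventually_elim (rule scaled_power_le_one_nearby[OF qn M \<delta>(2) s'(1,3) s(2) s'(4)])
  then show ?thesis by (rule bounded_scaled_powers_eventually[OF s(1)])
qed

lemma bounded_scaled_powers_if_quasinilpotent:
  fixes q :: "'a::complex_banach_algebra_1"
  assumes qn: "quasinilpotent q" and "0 \<le> s"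
  shows "bounded_scaled_powers q s"
proof -
  define \<rho> where "\<rho> = s + 1"
  obtain M where M: "\<And>z. cmod z \<le> \<rho> \<Longrightarrow> norm (resolvent q z) \<le> M"
    using resolvent_bounded[OF qn] by blast
  define \<delta> where "\<delta> = 1 / (4 * (M * M * norm q + 1))"
  have "0 \<le> M * M * norm q" by simp
  then have \<delta>: "0 < \<delta>" "(M * M * norm q) * \<delta> \<le> 1 / 4" unfolding \<delta>_def by (simp_all add: field_simps)
  define r0 where "r0 = 1 / (norm q + 1)"
  have r0: "0 < r0" unfolding r0_def by (simp add: add_nonneg_pos)
  have "bounded_scaled_powers q s'" if "0 \<le> s'" "s' < min \<rho> (r0 + real j * \<delta>)" for s' j
    using that
  proof (induction j arbitrary: s')
    case 0
    then have "s' * norm q \<le> r0 * norm q" by (intro mult_right_mono) auto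
    also have "\<dots> \<le> 1" unfolding r0_def using norm_ge_zero[of q] by (simp add: divide_le_eq not_less)
    finally show ?case using 0 by (intro bounded_scaled_powers_small)
  next
    case (Suc j)
    have "0 \<le> real j * \<delta>" using \<delta> by simp
    then have "0 < min \<rho> (r0 + real j * \<delta>)" using r0 \<open>0 \<le> s\<close> unfolding \<rho>_def by simp
    moreover have "s' < min \<rho> (r0 + real j * \<delta>) + \<delta>" "s' \<le> \<rho>"
      using Suc.prems \<delta>(1) by (auto simp: algebra_simps min_def split: if_splits)
    ultimately show ?case using bounded_scaled_powers_step[OF qn M \<delta>] Suc by blast
  qed
  note reach = this
  obtain j where "\<rho> < real j * \<delta>" using ex_less_of_nat_mult[OF \<delta>(1)] by blast
  then have "s < min \<rho> (r0 + real j * \<delta>)" using r0 unfolding \<rho>_def by simp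
  then show ?thesis using reach \<open>0 \<le> s\<close> by blast
qed

lemma norm_qnil_if_quasinilpotent:
  fixes q :: "'a::complex_banach_algebra_1"
  assumes "quasinilpotent q"
  shows "norm_qnil q"
  unfolding norm_qnil_def
proof (intro allI impI)
  fix \<epsilon> :: real assume e: "\<epsilon> > 0"
  obtain K where K: "\<And>m. (1 / \<epsilon>) ^ m * norm (q ^ m) \<le> K"
    using bounded_scaled_powers_if_quasinilpotent[OF assms, of "1 / \<epsilon>"] e
    unfolding bounded_scaled_powers_def by auto
  show "\<exists>C. \<forall>n. norm (q ^ n) \<le> C * \<epsilon> ^ n"
  proof (intro exI[of _ K] allI)
    fix n
    have "norm (q ^ n) = \<epsilon> ^ n * ((1 / \<epsilon>) ^ n * norm (q ^ n))" using e by (simp add: power_divide)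
    also have "\<dots> \<le> \<epsilon> ^ n * K" using e K by (intro mult_left_mono) auto
    finally show "norm (q ^ n) \<le> K * \<epsilon> ^ n" by (simp add: mult.commute)
  qed
qed

lemma quasinilpotent_iff_norm_qnil: "quasinilpotent (q::'a::complex_banach_algebra_1) \<longleftrightarrow> norm_qnil q"
  using norm_qnil_if_quasinilpotent quasinilpotent_if_norm_qnil by blast

section \<open>Triangular elements and quasi-idempotent powers\<close>

lemma idempotent_power:
  fixes e :: "'a::monoid_mult"
  assumes "e * e = e" "0 < n"
  shows "e ^ n = e"
  using assms(2) by (induction n rule: nat_induct_non_zero) (simp_all add: assms(1))

lemma idempotent_one_minus: "(e::'a::ring_1) * e = e \<Longrightarrow> (1 - e) * (1 - e) = 1 - e"
  by (simp add: algebra_simps)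

lemma idempotent_orth:
  fixes e :: "'a::ring_1"
  shows "e * e = e \<Longrightarrow> e * (1 - e) = 0" and "e * e = e \<Longrightarrow> (1 - e) * e = 0"
  by (simp_all add: algebra_simps)

text \<open>Below, \<open>e * T * (1 - e) = 0\<close> says that \<open>T\<close> is upper triangular in the Peirce decomposition
  with respect to the idempotent \<open>e\<close>.\<close>

lemma triangular_power:
  fixes e T :: "'a::ring_1"
  assumes ee: "e * e = e" and T: "e * T * (1 - e) = 0"
  shows "e * T ^ m * (1 - e) = 0"
    and "e * T ^ m * e = (e * T * e) ^ m * e"
    and "(1 - e) * T ^ m * (1 - e) = ((1 - e) * T * (1 - e)) ^ m * (1 - e)"
proof -
  have split: "X * T ^ Suc m * Y = X * T ^ m * e * (T * Y) + X * T ^ m * (1 - e) * (T * Y)" for X Y m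
    by (simp only: power_Suc2 mult.assoc) (simp add: algebra_simps)
  show off: "e * T ^ m * (1 - e) = 0" for m
  proof (induction m)
    case (Suc m)
    have "e * T ^ m * e * (T * (1 - e)) = 0" using T by (simp add: mult.assoc)
    then show ?case using Suc.IH by (simp only: split) simp
  qed (simp add: idempotent_orth[OF ee])
  show "e * T ^ m * e = (e * T * e) ^ m * e"
  proof (induction m)
    case (Suc m)
    have "e * T ^ Suc m * e = (e * T * e) ^ m * e * (T * e)"
      using off[of m] Suc.IH by (simp only: split) simp
    also have "\<dots> = (e * T * e) ^ Suc m * e" using ee by (simp add: power_Suc2 mult.assoc del: power_Suc)
    finally show ?case .
  qed (simp add: ee)
  show "(1 - e) * T ^ m * (1 - e) = ((1 - e) * T * (1 - e)) ^ m * (1 - e)"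
  proof (induction m)
    case (Suc m)
    have "(1 - e) * T ^ m * e * (T * (1 - e)) = 0" using T by (simp add: mult.assoc)
    then have "(1 - e) * T ^ Suc m * (1 - e) = ((1 - e) * T * (1 - e)) ^ m * (1 - e) * (T * (1 - e))"
      using Suc.IH by (simp only: split) simp
    also have "\<dots> = ((1 - e) * T * (1 - e)) ^ Suc m * (1 - e)"
      using idempotent_one_minus[OF ee] by (simp add: power_Suc2 mult.assoc del: power_Suc)
    finally show ?case .
  qed (simp add: idempotent_one_minus[OF ee])
qed

lemma corner_power_absorb:
  fixes e T :: "'a::ring_1"
  assumes "e * e = e" "0 < n"
  shows "(e * T * e) ^ n * e = (e * T * e) ^ n"
proof -
  obtain k where n: "n = Suc k" using assms(2) by (cases n) auto
  have "(e * T * e) ^ Suc k * e = (e * T * e) ^ k * (e * T * (e * e))"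
    by (simp only: power_Suc2 mult.assoc)
  also have "\<dots> = (e * T * e) ^ Suc k" using assms(1) by (simp add: mult.assoc power_Suc2 del: power_Suc)
  finally show ?thesis unfolding n .
qed

lemma norm_qnil_corners:
  fixes e T :: "'a::real_normed_algebra_1"
  assumes ee: "e * e = e" and T: "e * T * (1 - e) = 0" and qT: "norm_qnil T"
  shows "norm_qnil (e * T * e)" "norm_qnil ((1 - e) * T * (1 - e))"
proof -
  note tri = triangular_power[OF ee T]
  show "norm_qnil (e * T * e)"
  proof (rule norm_qnil_dominated[OF qT, where j = 1 and i = 1 and K = "norm e * norm e"])
    show "norm ((e * T * e) ^ (m + 1)) \<le> norm e * norm e * norm (T ^ (m + 1))" for m
      using tri(2)[of "m + 1"] corner_power_absorb[OF ee, of "m + 1"] norm_mult3_le[of e "T ^ (m + 1)" e]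
      by (simp add: mult_ac)
  qed simp
  show "norm_qnil ((1 - e) * T * (1 - e))"
  proof (rule norm_qnil_dominated[OF qT, where j = 1 and i = 1 and K = "norm (1 - e) * norm (1 - e)"])
    show "norm (((1 - e) * T * (1 - e)) ^ (m + 1)) \<le> norm (1 - e) * norm (1 - e) * norm (T ^ (m + 1))" for m
      using tri(3)[of "m + 1"] corner_power_absorb[OF idempotent_one_minus[OF ee], of "m + 1"]
        norm_mult3_le[of "1 - e" "T ^ (m + 1)" "1 - e"]
      by (simp add: mult_ac)
  qed simp
qed

lemma norm_qnil_if_corners:
  fixes e T :: "'a::real_normed_algebra_1"
  assumes ee: "e * e = e" and T: "e * T * (1 - e) = 0"
    and q1: "norm_qnil (e * T * e)" and q2: "norm_qnil ((1 - e) * T * (1 - e))"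
  shows "norm_qnil T"
proof -
  have Te_power: "(T * e) ^ Suc m = T * (e * T * e) ^ m * e" for m
  proof (induction m)
    case (Suc m)
    have "(T * e) ^ Suc (Suc m) = (T * e) ^ Suc m * (T * e)" by (rule power_Suc2)
    also have "\<dots> = T * (e * T * e) ^ m * (e * T * e)" unfolding Suc.IH by (simp only: mult.assoc)
    also have "\<dots> = T * (e * T * e) ^ Suc m * e" using ee by (simp add: power_Suc2 mult.assoc del: power_Suc)
    finally show ?case .
  qed simp
  have qTe: "norm_qnil (T * e)"
  proof (rule norm_qnil_dominated[OF q1, where j = 1 and i = 0 and K = "norm T * norm e"])
    show "norm ((T * e) ^ (m + 1)) \<le> norm T * norm e * norm ((e * T * e) ^ (m + 0))" for m
      using Te_power[of m] norm_mult3_le[of T "(e * T * e) ^ m" e] by (simp add: mult_ac)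
  qed simp
  have "T * (1 - e) = e * T * (1 - e) + (1 - e) * T * (1 - e)" by (simp add: algebra_simps)
  then have Tp: "T * (1 - e) = (1 - e) * T * (1 - e)" using T by simp
  have "(T * e) * (T * (1 - e)) = 0" using T by (simp add: mult.assoc)
  from norm_qnil_add_orth[OF this qTe] have "norm_qnil (T * e + T * (1 - e))"
    using q2 by (simp add: Tp)
  then show ?thesis by (simp add: algebra_simps)
qed

definition quasi_idem :: "'a::real_normed_algebra_1 \<Rightarrow> bool" where
  "quasi_idem c \<longleftrightarrow> norm_qnil (c - c\<^sup>2)"

definition pow_quasi_idem :: "'a::real_normed_algebra_1 \<Rightarrow> bool" where
  "pow_quasi_idem y \<longleftrightarrow> (\<exists>n>0. quasi_idem (y ^ n))"

lemma quasi_idem_if_idempotent: "e * e = e \<Longrightarrow> quasi_idem e"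
  by (simp add: quasi_idem_def power2_eq_square norm_qnil_0)

lemma quasi_idem_if_norm_qnil: "norm_qnil z \<Longrightarrow> quasi_idem z"
  unfolding quasi_idem_def power2_eq_square
  using norm_qnil_mult_left[of z "1 - z"] by (simp add: algebra_simps commute_def)

lemma quasi_idem_power:
  fixes c :: "'a::real_normed_algebra_1"
  assumes q: "quasi_idem c" and m: "0 < m"
  shows "quasi_idem (c ^ m)"
proof -
  define S where "S = c ^ (m - 1) * (\<Sum>i<m. c ^ i)"
  have "S * (c - c\<^sup>2) = c ^ (m - 1) * ((\<Sum>i<m. c ^ i) * (1 - c)) * c"
    unfolding S_def by (simp add: algebra_simps power2_eq_square)
  also have "\<dots> = c ^ (m - 1) * c - c ^ (m - 1) * c ^ m * c"
    unfolding one_diff_power_eq_ring(2) by (simp add: algebra_simps)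
  also have "\<dots> = c ^ m - (c ^ m)\<^sup>2"
  proof -
    have "c ^ (m - 1) * c ^ m * c = (c ^ (m - 1) * c) * c ^ m"
      by (simp only: mult.assoc power_commutes[of c m])
    then show ?thesis using power_minus_mult[OF m, of c] by (simp add: power2_eq_square)
  qed
  finally have eq: "c ^ m - (c ^ m)\<^sup>2 = S * (c - c\<^sup>2)" ..
  have "commute S (c - c\<^sup>2)" unfolding S_def by (intro commute_intros commute_sum_left)
  with q show ?thesis unfolding quasi_idem_def eq by (rule norm_qnil_mult_left)
qed

lemma pow_quasi_idem_if_norm_qnil: "norm_qnil z \<Longrightarrow> pow_quasi_idem z"
  unfolding pow_quasi_idem_def using quasi_idem_if_norm_qnil by force

lemma pow_quasi_idem_common:
  assumes "pow_quasi_idem y" "pow_quasi_idem z"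
  obtains n where "0 < n" "quasi_idem (y ^ n)" "quasi_idem (z ^ n)"
proof -
  obtain n1 n2 where n1: "0 < n1" "quasi_idem (y ^ n1)" and n2: "0 < n2" "quasi_idem (z ^ n2)"
    using assms unfolding pow_quasi_idem_def by blast
  have "y ^ (n1 * n2) = (y ^ n1) ^ n2" by (rule power_mult)
  with quasi_idem_power[OF n1(2) n2(1)] have "quasi_idem (y ^ (n1 * n2))" by simp
  moreover have "z ^ (n1 * n2) = (z ^ n2) ^ n1" by (simp only: mult.commute[of n1 n2] power_mult)
  with quasi_idem_power[OF n2(2) n1(1)] have "quasi_idem (z ^ (n1 * n2))" by simp
  ultimately show ?thesis using that[of "n1 * n2"] n1 n2 by simp
qed

lemma pow_quasi_idem_power_iff:
  assumes "0 < n"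
  shows "pow_quasi_idem (y ^ n) \<longleftrightarrow> pow_quasi_idem y"
proof
  assume "pow_quasi_idem (y ^ n)"
  then obtain m where "0 < m" "quasi_idem ((y ^ n) ^ m)" unfolding pow_quasi_idem_def by blast
  then show "pow_quasi_idem y"
    unfolding pow_quasi_idem_def power_mult[symmetric] using assms by (intro exI[of _ "n * m"]) simp
next
  assume "pow_quasi_idem y"
  then obtain m where "0 < m" "quasi_idem (y ^ m)" unfolding pow_quasi_idem_def by blast
  moreover have "(y ^ n) ^ m = (y ^ m) ^ n" by (simp only: power_mult[symmetric] mult.commute)
  ultimately have "quasi_idem ((y ^ n) ^ m)" using quasi_idem_power assms by simp
  then show "pow_quasi_idem (y ^ n)" unfolding pow_quasi_idem_def using \<open>0 < m\<close> by blast
qed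

lemma quasi_idem_add_norm_qnil:
  fixes z q :: "'a::real_normed_algebra_1"
  assumes c: "commute z q" and q: "norm_qnil q"
  shows "quasi_idem (z + q) \<longleftrightarrow> quasi_idem z"
proof -
  define r where "r = q * (1 - z - z - q)"
  have eq: "(z + q) - (z + q)\<^sup>2 = (z - z\<^sup>2) + r"
    using commuteD[OF c] unfolding r_def by (simp add: algebra_simps power2_eq_square)
  have "norm_qnil r" unfolding r_def using c q
    by (intro norm_qnil_mult_right) (auto intro!: commute_intros dest: commute_sym)
  moreover have "commute (z - z\<^sup>2) r" unfolding r_def using c by (intro commute_intros)
  ultimately show ?thesis unfolding quasi_idem_def eq by (rule norm_qnil_add_cancel[rotated])
qed

lemma power_add_norm_qnil:
  fixes x q :: "'a::real_normed_algebra_1"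
  assumes c: "commute x q" and q: "norm_qnil q"
  obtains q' where "(x + q) ^ n = x ^ n + q'" "norm_qnil q'" "commute (x ^ n) q'"
proof -
  define S where "S = (\<Sum>i<n. (x + q) ^ i * x ^ (n - Suc i))"
  have "(x + q) ^ n - x ^ n = q * S"
    using power_diff_power_commute[of "x + q" x n] commuteD[OF c] unfolding S_def
    by (simp add: commute_def algebra_simps)
  moreover have "norm_qnil (q * S)" unfolding S_def using c q
    by (intro norm_qnil_mult_right commute_sum_left) (auto intro!: commute_intros dest: commute_sym)
  moreover have "commute (x ^ n) (q * S)" unfolding S_def using c
    by (intro commute_intros commute_sum_right)
  ultimately show ?thesis using that[of "q * S"] by (simp add: algebra_simps)
qed

lemma pow_quasi_idem_add_norm_qnil:
  "commute x q \<Longrightarrow> norm_qnil q \<Longrightarrow> pow_quasi_idem (x + q) \<longleftrightarrow> pow_quasi_idem x"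
proof -
  assume "commute x q" "norm_qnil q"
  have "quasi_idem ((x + q) ^ n) \<longleftrightarrow> quasi_idem (x ^ n)" for n
  proof -
    obtain q' where "(x + q) ^ n = x ^ n + q'" "norm_qnil q'" "commute (x ^ n) q'"
      using power_add_norm_qnil[OF \<open>commute x q\<close> \<open>norm_qnil q\<close>] .
    then show ?thesis using quasi_idem_add_norm_qnil by simp
  qed
  then show ?thesis unfolding pow_quasi_idem_def by simp
qed

lemma pow_quasi_idem_triangular:
  fixes e T :: "'a::real_normed_algebra_1"
  assumes ee: "e * e = e" and T: "e * T * (1 - e) = 0"
  shows "pow_quasi_idem T \<longleftrightarrow> pow_quasi_idem (e * T * e) \<and> pow_quasi_idem ((1 - e) * T * (1 - e))"
proof -
  have corners: "e * (T ^ n - (T ^ n)\<^sup>2) * (1 - e) = 0 \<and>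
      e * (T ^ n - (T ^ n)\<^sup>2) * e = (e * T * e) ^ n - ((e * T * e) ^ n)\<^sup>2 \<and>
      (1 - e) * (T ^ n - (T ^ n)\<^sup>2) * (1 - e) =
        ((1 - e) * T * (1 - e)) ^ n - (((1 - e) * T * (1 - e)) ^ n)\<^sup>2"
    if n: "0 < n" for n
  proof -
    have sq: "(X ^ n)\<^sup>2 = X ^ (2 * n)" for X :: 'a by (simp add: power_mult[symmetric] mult.commute)
    have distrib: "X * (A - B) * Y = X * A * Y - X * B * Y" for X Y A B :: 'a
      by (simp add: algebra_simps)
    have n2: "0 < 2 * n" using n by simp
    show ?thesis
      unfolding sq distrib triangular_power[OF ee T] corner_power_absorb[OF ee n]
        corner_power_absorb[OF ee n2] corner_power_absorb[OF idempotent_one_minus[OF ee] n]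
        corner_power_absorb[OF idempotent_one_minus[OF ee] n2]
      by simp
  qed
  show ?thesis
  proof
    assume "pow_quasi_idem T"
    then obtain n where n: "0 < n" "norm_qnil (T ^ n - (T ^ n)\<^sup>2)"
      unfolding pow_quasi_idem_def quasi_idem_def by blast
    from norm_qnil_corners[OF ee _ n(2)] corners[OF n(1)] n(1)
    show "pow_quasi_idem (e * T * e) \<and> pow_quasi_idem ((1 - e) * T * (1 - e))"
      unfolding pow_quasi_idem_def quasi_idem_def by auto
  next
    assume "pow_quasi_idem (e * T * e) \<and> pow_quasi_idem ((1 - e) * T * (1 - e))"
    then obtain n where "0 < n" "quasi_idem ((e * T * e) ^ n)" "quasi_idem (((1 - e) * T * (1 - e)) ^ n)"
      using pow_quasi_idem_common by blast
    then show "pow_quasi_idem T"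
      using norm_qnil_if_corners[OF ee, of "T ^ n - (T ^ n)\<^sup>2"] corners
      unfolding pow_quasi_idem_def quasi_idem_def by auto
  qed
qed

section \<open>Norm-Hirano inverses\<close>

text \<open>The norm form of a g\<open>\<pi>\<close>-Hirano inverse: \<open>a\<^sup>n - a x\<close> replaces \<open>a - a\<^sup>n\<^sup>+\<^sup>2 x\<close>; the two
  notions agree (\<open>is_gpiH_inverse_iff_hirano\<close>).\<close>

definition hirano_inverse :: "'a::real_normed_algebra_1 \<Rightarrow> 'a \<Rightarrow> bool" where
  "hirano_inverse a x \<longleftrightarrow> x * a * x = x \<and> a * x = x * a \<and> (\<exists>n>0. norm_qnil (a ^ n - a * x))"

lemma hirano_inverseD:
  assumes "hirano_inverse a x"
  shows "(a * x) * (a * x) = a * x" "x * (a * x) = x" "(a * x) * x = x" "x * a = a * x"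
    "commute a x" "commute a (a * x)" "commute x (a * x)"
proof -
  have xax: "x * a * x = x" and c: "a * x = x * a" using assms unfolding hirano_inverse_def by auto
  show "(a * x) * (a * x) = a * x" "x * (a * x) = x" using xax by (simp_all add: mult.assoc)
  show "(a * x) * x = x" "x * a = a * x" using xax c by simp_all
  show ca: "commute a x" using c unfolding commute_def .
  then show "commute a (a * x)" "commute x (a * x)" by (auto intro!: commute_intros dest: commute_sym)
qed

lemma norm_qnil_hirano_complement:
  assumes g: "hirano_inverse a x"
  shows "norm_qnil (a * (1 - a * x))"
proof -
  define e where "e = a * x"
  obtain n where n: "0 < n" "norm_qnil (a ^ n - e)" using g unfolding hirano_inverse_def e_def by blast
  have ee: "e * e = e" and ce: "commute a e" unfolding e_def using hirano_inverseD[OF g] by simp_all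
  have "(a * (1 - e)) ^ n = a ^ n * (1 - e)"
    using ce idempotent_power[OF idempotent_one_minus[OF ee] n(1)]
    by (simp add: power_mult_commute commute_intros)
  also have "\<dots> = (a ^ n - e) * (1 - e)" using idempotent_orth[OF ee] by (simp add: algebra_simps)
  finally have "norm_qnil ((a * (1 - e)) ^ n)"
    using n(2) ce by (simp add: norm_qnil_mult_right commute_intros commute_sym)
  then show ?thesis unfolding e_def using norm_qnil_root n(1) by blast
qed

lemma quasi_idem_power_if_hirano:
  assumes g: "hirano_inverse a x" and n: "norm_qnil (a ^ n - a * x)"
  shows "quasi_idem (a ^ n)"
proof -
  define e where "e = a * x"
  have ee: "e * e = e" and ce: "commute a e" unfolding e_def using hirano_inverseD[OF g] by simp_all
  have "commute e (a ^ n - e)" using ce by (auto intro!: commute_intros dest: commute_sym)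
  from quasi_idem_add_norm_qnil[OF this] n quasi_idem_if_idempotent[OF ee]
  show ?thesis unfolding e_def by simp
qed

lemma pow_quasi_idem_if_hirano: "hirano_inverse a x \<Longrightarrow> pow_quasi_idem a"
  using quasi_idem_power_if_hirano unfolding hirano_inverse_def pow_quasi_idem_def by blast

text \<open>The idempotent \<open>a x\<close> of one norm-Hirano inverse \<open>x\<close> is annihilated by \<open>1 - a y\<close> for any
  other one \<open>y\<close>: \<open>a x (1 - a y) = x\<^sup>m a\<^sup>m (1 - a y)\<close> is dominated by \<open>\<parallel>x\<parallel>\<^sup>m \<parallel>(a (1 - a y))\<^sup>m\<parallel>\<close>.\<close>

lemma hirano_idempotents_orth:
  assumes gx: "hirano_inverse a x" and gy: "hirano_inverse a y"
  shows "(a * x) * (1 - a * y) = 0" "(1 - a * y) * (a * x) = 0"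
proof -
  define e f where "e = a * x" and "f = a * y"
  have w: "norm_qnil (a * (1 - f))" unfolding f_def by (rule norm_qnil_hirano_complement[OF gy])
  have ff: "f * f = f" and cf: "commute a f" unfolding f_def using hirano_inverseD[OF gy] by simp_all
  have ee: "e * e = e" and cx: "commute a x" unfolding e_def using hirano_inverseD[OF gx] by simp_all
  have af: "(a * (1 - f)) ^ Suc m = a ^ Suc m * (1 - f)" for m
    using cf idempotent_power[OF idempotent_one_minus[OF ff], of "Suc m"]
    by (simp add: power_mult_commute commute_intros del: power_Suc)
  have ea: "e = x ^ Suc m * a ^ Suc m" "e = a ^ Suc m * x ^ Suc m" for m
    using idempotent_power[OF ee, of "Suc m"] power_mult_commute[OF cx, of "Suc m"]
      power_mult_commute[OF commute_sym[OF cx], of "Suc m"] hirano_inverseD(4)[OF gx]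
    unfolding e_def by (simp_all del: power_Suc)
  have ca: "commute (a ^ Suc m) (1 - f)" for m using cf by (intro commute_intros)
  show "e * (1 - f) = 0"
  proof (rule eq_0_if_norm_le_norm_qnil_powers[OF w, where u = x and K = 1])
    fix m
    have eq: "e * (1 - f) = x ^ Suc m * (a * (1 - f)) ^ Suc m"
      unfolding af by (subst ea(1)[of m]) (simp add: mult.assoc del: power_Suc)
    show "norm (e * (1 - f)) \<le> 1 * (norm x ^ Suc m * norm ((a * (1 - f)) ^ Suc m))"
      unfolding eq mult_1_left by (rule norm_power_mult_le)
  qed simp
  show "(1 - f) * e = 0"
  proof (rule eq_0_if_norm_le_norm_qnil_powers[OF w, where u = x and K = 1])
    fix m
    have eq: "(1 - f) * e = (a * (1 - f)) ^ Suc m * x ^ Suc m"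
      unfolding af using commuteD[OF ca[of m]]
      by (subst ea(2)[of m]) (simp add: mult.assoc[symmetric] del: power_Suc)
    show "norm ((1 - f) * e) \<le> 1 * (norm x ^ Suc m * norm ((a * (1 - f)) ^ Suc m))"
      unfolding eq mult_1_left mult.commute[of "norm x ^ Suc m"] by (rule norm_mult_power_le)
  qed simp
qed

lemma hirano_inverse_unique:
  assumes gx: "hirano_inverse a x" and gy: "hirano_inverse a y"
  shows "x = y"
proof -
  have "a * x = a * y * (a * x)" using hirano_idempotents_orth(2)[OF gx gy] by (simp add: left_diff_distrib)
  also have "\<dots> = a * y" using hirano_idempotents_orth(1)[OF gy gx] by (simp add: right_diff_distrib)
  finally have same: "a * x = a * y" .
  have "x = x * (a * y)" using hirano_inverseD(2)[OF gx] same by simp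
  also have "\<dots> = (a * x) * y" using hirano_inverseD(4)[OF gx] by (simp add: mult.assoc[symmetric])
  also have "\<dots> = y" using hirano_inverseD(3)[OF gy] same by simp
  finally show ?thesis .
qed

text \<open>The Taylor coefficients of \<open>(1 - 4 t) powr (-1/2)\<close> (these are the central binomial
  coefficients).\<close>

definition inv_sqrt_coeff :: "nat \<Rightarrow> real" where
  "inv_sqrt_coeff n = ((-1/2) gchoose n) * (-4) ^ n"

lemma abs_gchoose_minus_half_le: "\<bar>(-1/2::real) gchoose n\<bar> \<le> 1"
proof -
  have "\<bar>\<Prod>i = 0..<n. (-1/2::real) - of_nat i\<bar> = (\<Prod>i = 0..<n. \<bar>-1/2 - of_nat i\<bar>)"
    by (rule abs_prod)
  also have "\<dots> \<le> (\<Prod>i = 0..<n. of_nat (Suc i))" by (rule prod_mono) auto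
  also have "\<dots> = fact n" by (simp add: fact_prod_Suc)
  finally have "fact n * \<bar>(-1/2::real) gchoose n\<bar> \<le> fact n"
    by (simp add: gbinomial_mult_fact[symmetric] abs_mult)
  then show ?thesis by (simp add: mult_le_cancel_left1)
qed

lemma abs_inv_sqrt_coeff_le: "\<bar>inv_sqrt_coeff n\<bar> \<le> 4 ^ n"
  unfolding inv_sqrt_coeff_def abs_mult using abs_gchoose_minus_half_le[of n]
  by (simp add: power_abs mult_left_le_one_le)

lemma inv_sqrt_coeff_convolution: "(\<Sum>i\<le>n. inv_sqrt_coeff i * inv_sqrt_coeff (n - i)) = 4 ^ n"
proof -
  have "(\<Sum>i\<le>n. inv_sqrt_coeff i * inv_sqrt_coeff (n - i)) =
      (\<Sum>i=0..n. ((-1/2::real) gchoose i) * ((-1/2) gchoose (n - i))) * (-4) ^ n"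
    unfolding inv_sqrt_coeff_def sum_distrib_right atMost_atLeast0
    by (intro sum.cong refl) (simp add: power_add[symmetric] mult_ac)
  also have "(\<Sum>i=0..n. ((-1/2::real) gchoose i) * ((-1/2) gchoose (n - i))) = (-1) gchoose n"
    using gbinomial_Vandermonde[of "-1/2::real" "-1/2" n] by simp
  also have "((-1::real) gchoose n) = (-1) ^ n"
    using gbinomial_minus[of "1::real" n] binomial_gbinomial[of n n] by simp
  finally show ?thesis by (simp flip: power_mult_distrib)
qed

lemma norm_qnil_inv_sqrt:
  fixes r :: "'a::{real_normed_algebra_1,banach}"
  assumes r: "norm_qnil r"
  obtains t where "(1 - 4 *\<^sub>R r) * ((1 + r * t) * (1 + r * t)) = 1"
    "\<And>y. commute y r \<Longrightarrow> commute y t"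
proof -
  obtain C where C: "\<And>n. norm (r ^ n) \<le> C * (1 / 8) ^ n" using norm_qnilD[OF r, of "1 / 8"] by auto
  have "1 \<le> C" using power_bound_ge_one[OF C] .
  have coeff: "\<bar>inv_sqrt_coeff (n + k)\<bar> * norm (r ^ n) \<le> (4 ^ k * C) * (1 / 2) ^ n" for n k
  proof -
    have "\<bar>inv_sqrt_coeff (n + k)\<bar> * norm (r ^ n) \<le> 4 ^ (n + k) * (C * (1 / 8) ^ n)"
      by (intro mult_mono abs_inv_sqrt_coeff_le C) (use \<open>1 \<le> C\<close> in auto)
    also have "\<dots> = C * 4 ^ k * (4 ^ n * (1 / 8) ^ n)" by (simp add: power_add mult_ac)
    also have "(4::real) ^ n * (1 / 8) ^ n = (1 / 2) ^ n" by (simp flip: power_mult_distrib)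
    finally show ?thesis by (simp add: mult_ac)
  qed
  define A where "A n = inv_sqrt_coeff n *\<^sub>R r ^ n" for n
  define T where "T n = inv_sqrt_coeff (Suc n) *\<^sub>R r ^ n" for n
  have "norm (A n) \<le> C * (1 / 2) ^ n" for n using coeff[of n 0] by (simp add: A_def)
  note sA = summable_norm_le_half_power[OF this]
  have "norm (T n) \<le> (4 * C) * (1 / 2) ^ n" for n using coeff[of n 1] by (simp add: T_def)
  note sT = summable_norm_le_half_power[OF this]
  define t where "t = suminf T"
  have "suminf A = A 0 + (\<Sum>n. A (Suc n))" using suminf_split_head[OF sA(2)] by simp
  also have "(\<Sum>n. A (Suc n)) = (\<Sum>n. r * T n)" unfolding A_def T_def by (simp add: mult.assoc)
  also have "\<dots> = r * t" unfolding t_def by (rule suminf_mult[OF sT(2)])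
  moreover have "A 0 = 1" by (simp add: A_def inv_sqrt_coeff_def)
  ultimately have s: "suminf A = 1 + r * t" by simp
  have "suminf A * suminf A = (\<Sum>k. \<Sum>i\<le>k. A i * A (k - i))" by (rule Cauchy_product[OF sA(1) sA(1)])
  also have "\<dots> = (\<Sum>k. (4 *\<^sub>R r) ^ k)"
  proof (rule suminf_cong)
    fix k
    have "(\<Sum>i\<le>k. A i * A (k - i)) = (\<Sum>i\<le>k. (inv_sqrt_coeff i * inv_sqrt_coeff (k - i)) *\<^sub>R r ^ k)"
      unfolding A_def by (intro sum.cong refl) (simp flip: power_add)
    also have "\<dots> = (4 *\<^sub>R r) ^ k"
      by (simp add: scaleR_sum_left[symmetric] inv_sqrt_coeff_convolution)
    finally show "(\<Sum>i\<le>k. A i * A (k - i)) = (4 *\<^sub>R r) ^ k" .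
  qed
  finally have "(1 - 4 *\<^sub>R r) * (suminf A * suminf A) = 1"
    using norm_qnil_neumann(1)[OF norm_qnil_scaleR[OF r]] by simp
  moreover have "commute y t" if "commute y r" for y
    unfolding t_def using that by (intro commute_suminf[OF sT(2)]) (simp add: T_def commute_intros)
  ultimately show ?thesis using that s by simp
qed

text \<open>The idempotent is \<open>f = (1 + (2 c - 1) (1 - 4 (c - c\<^sup>2)) powr (-1/2)) / 2\<close>, the holomorphic
  functional calculus applied to the indicator of \<open>Re z > 1/2\<close>; note \<open>(2 c - 1)\<^sup>2 = 1 - 4 (c - c\<^sup>2)\<close>.\<close>

lemma quasi_idem_lift:
  fixes c :: "'a::{real_normed_algebra_1,banach}"
  assumes "quasi_idem c"
  obtains f where "f * f = f" "norm_qnil (c - f)" "\<And>y. commute y c \<Longrightarrow> commute y f"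
proof -
  define r where "r = c - c\<^sup>2"
  have r: "norm_qnil r" using assms unfolding quasi_idem_def r_def .
  obtain t where inv: "(1 - 4 *\<^sub>R r) * ((1 + r * t) * (1 + r * t)) = 1"
    and ct: "\<And>y. commute y r \<Longrightarrow> commute y t"
    using norm_qnil_inv_sqrt[OF r] by blast
  define w where "w = 2 *\<^sub>R c - 1"
  define s where "s = 1 + r * t"
  define f where "f = (1 / 2) *\<^sub>R (1 + w * s)"
  have cr: "commute y r" if "commute y c" for y unfolding r_def using that by (intro commute_intros)
  have cf: "commute y f" if "commute y c" for y
    unfolding f_def s_def w_def using that cr[OF that] ct[OF cr[OF that]] by (intro commute_intros)
  have "(4::real) *\<^sub>R c = 2 *\<^sub>R c + 2 *\<^sub>R c" by (simp flip: scaleR_add_left)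
  then have ww: "w * w = 1 - 4 *\<^sub>R r"
    unfolding w_def r_def by (simp add: algebra_simps power2_eq_square)
  have "commute s w" unfolding s_def w_def using ct[OF cr[OF commute_refl]] cr[OF commute_refl]
    by (intro commute_intros) (auto dest: commute_sym)
  note sw = commuteD[OF this]
  have "(w * s) * (w * s) = w * (s * w) * s" by (simp only: mult.assoc)
  also have "\<dots> = (w * w) * (s * s)" unfolding sw by (simp only: mult.assoc)
  also have "\<dots> = 1" unfolding ww s_def by (rule inv)
  finally have "(w * s) * (w * s) = 1" .
  then have ff: "f * f = f" unfolding f_def by (simp add: algebra_simps scaleR_2 flip: scaleR_add_left)
  have "norm_qnil (r * t)"
    using norm_qnil_mult_right[OF r commute_sym[OF ct[OF commute_refl]]] .
  moreover have "commute w (r * t)"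
    unfolding w_def using ct[OF cr[OF commute_refl]] cr[OF commute_refl] by (intro commute_intros)
  ultimately have "norm_qnil (w * (r * t))" by (rule norm_qnil_mult_left)
  moreover have "c - f = - ((1 / 2) *\<^sub>R (w * (r * t)))"
    unfolding f_def s_def w_def by (simp add: algebra_simps flip: scaleR_add_left)
  ultimately show ?thesis using that[OF ff] cf by (simp add: norm_qnil_minus norm_qnil_scaleR)
qed

lemma invertible_el_of_power:
  fixes x :: "'a::ring_1"
  assumes "invertible_el (x ^ n)" "0 < n"
  shows "invertible_el x"
proof -
  obtain w where w: "x ^ n * w = 1" "w * x ^ n = 1" using assms(1) unfolding invertible_el_def by blast
  have "x * x ^ (n - 1) = x ^ n" "x ^ (n - 1) * x = x ^ n" using assms(2) by (cases n; simp add: power_commutes)+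
  then have "x * (x ^ (n - 1) * w) = 1" "(w * x ^ (n - 1)) * x = 1"
    using w by (simp_all add: mult.assoc[symmetric]) (simp add: mult.assoc)
  then show ?thesis unfolding invertible_el_def
    using left_inverse_eq_right_inverse by metis
qed

lemma power_idempotent_shift:
  fixes b f :: "'a::ring_1"
  assumes ff: "f * f = f" and bf: "commute b f"
  shows "(b * f + (1 - f)) ^ Suc m = b ^ Suc m * f + (1 - f)"
proof (induction m)
  case (Suc m)
  have fb: "f * b = b * f" using bf by (simp add: commute_def)
  have "(b * f + (1 - f)) ^ Suc (Suc m) = (b ^ Suc m * f + (1 - f)) * (b * f + (1 - f))"
    using Suc by (simp only: power_Suc2)
  also have "\<dots> = b ^ Suc m * (f * b) * f + b ^ Suc m * (f * (1 - f)) + (1 - f) * b * f + (1 - f) * (1 - f)"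
    by (simp add: algebra_simps)
  also have "\<dots> = b ^ Suc m * b * f + (1 - f)"
  proof -
    have "(1 - f) * b * f = (1 - f) * f * b" by (simp add: mult.assoc fb)
    then have "(1 - f) * b * f = 0" using idempotent_orth(2)[OF ff] by simp
    moreover have "b ^ Suc m * (f * b) * f = b ^ Suc m * b * f" using ff unfolding fb by (simp add: mult.assoc)
    ultimately show ?thesis using idempotent_orth(1)[OF ff] idempotent_one_minus[OF ff] by simp
  qed
  also have "\<dots> = b ^ Suc (Suc m) * f + (1 - f)" by (simp only: power_Suc2)
  finally show ?case .
qed simp

text \<open>The inverse comes from \<open>b f + (1 - f)\<close>, whose \<open>n\<close>-th power \<open>1 + (b\<^sup>n - f) f\<close> is invertible.\<close>

lemma hirano_inverse_if_idempotent:
  fixes b f :: "'a::{real_normed_algebra_1,banach}"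
  assumes ff: "f * f = f" and bf: "commute b f" and n: "0 < n" and q: "norm_qnil (b ^ n - f)"
  shows "\<exists>y. hirano_inverse b y \<and> b * y = f"
proof -
  define z where "z = b * f + (1 - f)"
  obtain k where k: "n = Suc k" using n by (cases n) auto
  have "z ^ n = 1 + (b ^ n - f) * f"
    unfolding z_def k power_idempotent_shift[OF ff bf] using ff by (simp add: algebra_simps)
  moreover have "norm_qnil ((b ^ n - f) * f)" using q bf
    by (intro norm_qnil_mult_right) (auto intro!: commute_intros dest: commute_sym)
  ultimately have "invertible_el z" using invertible_el_one_plus_norm_qnil invertible_el_of_power n by metis
  then obtain u where zu: "z * u = 1" "u * z = 1" unfolding invertible_el_def by blast
  have fb: "f * b = b * f" using bf by (simp add: commute_def)
  have "commute z b" unfolding z_def using bf by (auto intro!: commute_intros dest: commute_sym)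
  then have ub: "u * b = b * u" using commute_inverse[OF zu] by (simp add: commute_def)
  have zf: "z * f = b * f" unfolding z_def using ff idempotent_orth[OF ff] by (simp add: algebra_simps)
  define y where "y = u * f"
  have "b * y = u * (z * f)" unfolding y_def zf by (simp add: mult.assoc[symmetric] ub)
  also have "\<dots> = f" using zu(2) by (simp add: mult.assoc[symmetric])
  finally have b_y: "b * y = f" .
  have "y * b * y = y" using b_y unfolding y_def by (simp add: mult.assoc ff)
  moreover have "b * (u * f) = u * (b * f)" by (simp add: mult.assoc[symmetric] ub)
  then have "b * y = y * b" unfolding y_def by (simp add: mult.assoc fb)
  ultimately have "hirano_inverse b y" unfolding hirano_inverse_def using n q b_y by auto
  then show ?thesis using b_y by blast
qed

lemma hirano_inverse_exists_iff: "(\<exists>x. hirano_inverse a x) \<longleftrightarrow> pow_quasi_idem (a::'a::{real_normed_algebra_1,banach})"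
proof
  assume "pow_quasi_idem a"
  then obtain n where n: "0 < n" "quasi_idem (a ^ n)" unfolding pow_quasi_idem_def by blast
  obtain f where "f * f = f" "norm_qnil (a ^ n - f)" "\<And>y. commute y (a ^ n) \<Longrightarrow> commute y f"
    using quasi_idem_lift[OF n(2)] by blast
  then show "\<exists>x. hirano_inverse a x"
    using hirano_inverse_if_idempotent[OF _ _ n(1)] by (meson commute_power_right commute_refl)
qed (use pow_quasi_idem_if_hirano in blast)

lemma gpiH_inverse_if_hirano:
  fixes a x :: "'a::complex_banach_algebra_1"
  assumes g: "hirano_inverse a x"
  shows "is_gpiH_inverse a x"
proof -
  define e where "e = a * x"
  obtain n where n: "0 < n" "norm_qnil (a ^ n - e)" using g unfolding hirano_inverse_def e_def by blast
  have ee: "e * e = e" and ce: "commute a e" unfolding e_def using hirano_inverseD[OF g] by simp_all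
  have "a ^ (n + 2) = a * a ^ n * a" by (simp add: power_commutes mult.assoc)
  then have "a ^ (n + 2) * x = a * a ^ n * e" unfolding e_def by (simp add: mult.assoc)
  then have eq: "a - a ^ (n + 2) * x = a * (1 - e) - a * ((a ^ n - e) * e)"
    using ee by (simp add: algebra_simps mult.assoc)
  have "norm_qnil (a * (1 - e))" unfolding e_def by (rule norm_qnil_hirano_complement[OF g])
  moreover have "norm_qnil (a * ((a ^ n - e) * e))"
    using n(2) ce by (intro norm_qnil_mult_left norm_qnil_mult_right) (auto intro!: commute_intros dest: commute_sym)
  moreover have "commute (a * (1 - e)) (a * ((a ^ n - e) * e))"
    using ce by (auto intro!: commute_intros dest: commute_sym)
  ultimately have "quasinilpotent (a - a ^ (n + 2) * x)"
    unfolding eq by (intro quasinilpotent_if_norm_qnil norm_qnil_diff)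
  then show ?thesis using g n(1) unfolding is_gpiH_inverse_def hirano_inverse_def by blast
qed

lemma hirano_if_gpiH_inverse:
  fixes a x :: "'a::complex_banach_algebra_1"
  assumes g: "is_gpiH_inverse a x"
  shows "hirano_inverse a x"
proof -
  define e where "e = a * x"
  have xax: "x * a * x = x" and c: "a * x = x * a" using g unfolding is_gpiH_inverse_def by auto
  obtain n where n: "0 < n" "quasinilpotent (a - a ^ (n + 2) * x)"
    using g unfolding is_gpiH_inverse_def by blast
  define q where "q = a - a ^ (n + 2) * x"
  have q: "norm_qnil q" unfolding q_def using n(2) by (simp add: quasinilpotent_iff_norm_qnil)
  have ee: "e * e = e" and xe: "x * e = x" unfolding e_def using xax by (simp_all add: mult.assoc)
  have xa: "x * a = e" unfolding e_def using c by simp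
  have cax: "commute a x" using c unfolding commute_def .
  have ce: "commute a e" and cxe: "commute x e" unfolding e_def using cax
    by (auto intro!: commute_intros dest: commute_sym)
  have cq: "commute e q" "commute x q" "commute a q"
    unfolding q_def using ce cxe cax by (auto intro!: commute_intros dest: commute_sym)
  have "a ^ (n + 2) = a ^ (n + 1) * a" by (simp add: power_commutes mult.assoc)
  then have ax: "a ^ (n + 2) * x = a ^ (n + 1) * e" unfolding e_def by (simp only: mult.assoc)
  have "q * (1 - e) = a * (1 - e)"
    using xe ee unfolding q_def ax by (simp add: algebra_simps mult.assoc)
  then have "norm_qnil (a * (1 - e))"
    using norm_qnil_mult_right[OF q, of "1 - e"] cq by (simp add: commute_intros)
  then have "norm_qnil ((a * (1 - e)) ^ n)" using n(1) by (rule norm_qnil_power)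
  moreover have "(a * (1 - e)) ^ n = a ^ n * (1 - e)"
    using ce idempotent_power[OF idempotent_one_minus[OF ee] n(1)]
    by (simp add: power_mult_commute commute_intros)
  moreover have "x * (q * e) = e - a ^ n * e"
  proof -
    have "x * a ^ (n + 1) = (x * a) * a ^ n" by (simp add: mult.assoc)
    also have "\<dots> = a ^ n * e"
      unfolding xa by (rule commuteD[OF commute_power_right[OF commute_sym[OF ce]]])
    finally have "x * a ^ (n + 1) * e * e = a ^ n * e" using ee by (simp add: mult.assoc)
    moreover have "x * (q * e) = x * a * e - x * a ^ (n + 1) * e * e"
      unfolding q_def ax by (simp add: algebra_simps)
    ultimately show ?thesis using xa ee by simp
  qed
  moreover have "norm_qnil (x * (q * e))"
    using norm_qnil_mult_right[OF q cq(1)] cq(2) cxe by (simp add: norm_qnil_mult_left commute_intros)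
  moreover have "commute (a ^ n * (1 - e)) (e - a ^ n * e)" using ce
    by (auto intro!: commute_intros dest: commute_sym)
  ultimately have "norm_qnil (a ^ n * (1 - e) - (e - a ^ n * e))" by (simp add: norm_qnil_diff)
  then have "norm_qnil (a ^ n - a * x)" unfolding e_def by (simp add: algebra_simps)
  then show ?thesis unfolding hirano_inverse_def using xax c n(1) by blast
qed

lemma is_gpiH_inverse_iff_hirano: "is_gpiH_inverse a x \<longleftrightarrow> hirano_inverse a (x::'a::complex_banach_algebra_1)"
  using gpiH_inverse_if_hirano hirano_if_gpiH_inverse by blast

lemma gpiH_invertible_iff_pow_quasi_idem: "gpiH_invertible (a::'a::complex_banach_algebra_1) \<longleftrightarrow> pow_quasi_idem a"
  unfolding gpiH_invertible_def is_gpiH_inverse_iff_hirano hirano_inverse_exists_iff ..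

lemma gpiH_inv_eq: "hirano_inverse a x \<Longrightarrow> gpiH_inv (a::'a::complex_banach_algebra_1) = x"
  unfolding gpiH_inv_def is_gpiH_inverse_iff_hirano using hirano_inverse_unique by blast

lemma hirano_word_comm_swap:
  assumes g: "hirano_inverse a x" and ab: "word_comm k a b"
  shows "x * b * a = (a * x) * b"
proof -
  have ee: "(a * x) * (a * x) = a * x" and xe: "x * (a * x) = x" and xa: "x * a = a * x"
    using hirano_inverseD[OF g] by simp_all
  have "word a b (replicate k True @ replicate 0 False) * a * b =
      word a b (replicate k True @ replicate 0 False) * b * a"
    using ab unfolding word_comm_def by simp
  then have ak: "a ^ k * (a * b - b * a) = 0" unfolding word_replicate by (simp add: algebra_simps)
  have "x ^ Suc k * a ^ k = x * (x * a) ^ k"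
    using power_mult_commute[OF commute_sym[OF hirano_inverseD(5)[OF g]], of k] by (simp add: mult.assoc)
  also have "\<dots> = x" using xe idempotent_power[OF ee, of k] unfolding xa by (cases k) simp_all
  finally have "x * (a * b - b * a) = x ^ Suc k * (a ^ k * (a * b - b * a))"
    by (simp only: mult.assoc[symmetric])
  then have "x * (a * b - b * a) = 0" by (simp only: ak mult_zero_right)
  then have eq: "x * (a * b) = x * (b * a)" by (simp add: right_diff_distrib)
  have "x * b * a = x * (a * b)" using eq by (simp add: mult.assoc)
  also have "\<dots> = (a * x) * b" by (simp add: mult.assoc[symmetric] xa)
  finally show ?thesis .
qed

text \<open>\<open>e b (1 - e) = x\<^sup>m b (a (1 - e))\<^sup>m\<close> for every \<open>m\<close>, and \<open>a (1 - e)\<close> is norm-quasinilpotent.\<close>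

lemma hirano_triangular:
  assumes g: "hirano_inverse a x" and xba: "x * b * a = (a * x) * b"
  shows "(a * x) * b * (1 - a * x) = 0"
proof -
  define e where "e = a * x"
  have xe: "x * e = x" and ce: "commute a e" unfolding e_def using hirano_inverseD[OF g] by simp_all
  have ee: "e * e = e" unfolding e_def using hirano_inverseD[OF g] by simp
  have xj: "e * b = x ^ Suc j * b * a ^ Suc j" for j
  proof (induction j)
    case (Suc j)
    have "x ^ Suc (Suc j) * b * a ^ Suc (Suc j) = x ^ Suc j * (x * b * a) * a ^ Suc j"
      by (simp only: power_Suc2[of x "Suc j"] power_Suc[of a "Suc j"] mult.assoc)
    also have "\<dots> = (x ^ Suc j * e) * b * a ^ Suc j" unfolding xba e_def by (simp only: mult.assoc)
    also have "x ^ Suc j * e = x ^ Suc j" using xe by (simp add: power_Suc2 mult.assoc del: power_Suc)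
    finally show ?case using Suc by simp
  qed (use xba e_def in simp)
  have af: "(a * (1 - e)) ^ Suc m = a ^ Suc m * (1 - e)" for m
    using ce idempotent_power[OF idempotent_one_minus[OF ee], of "Suc m"]
    by (simp add: power_mult_commute commute_intros del: power_Suc)
  have w: "norm_qnil (a * (1 - e))" unfolding e_def by (rule norm_qnil_hirano_complement[OF g])
  have "e * b * (1 - e) = 0"
  proof (rule eq_0_if_norm_le_norm_qnil_powers[OF w, where u = x and K = "norm b"])
    fix m
    have "e * b * (1 - e) = x ^ Suc m * b * (a * (1 - e)) ^ Suc m"
      unfolding af xj[of m] by (simp only: mult.assoc)
    then have "norm (e * b * (1 - e)) \<le> norm (x ^ Suc m) * norm b * norm ((a * (1 - e)) ^ Suc m)"
      by (simp only: norm_mult3_le)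
    also have "\<dots> \<le> norm x ^ Suc m * norm b * norm ((a * (1 - e)) ^ Suc m)"
      by (intro mult_right_mono norm_power_ineq) auto
    finally show "norm (e * b * (1 - e)) \<le> norm b * (norm x ^ Suc m * norm ((a * (1 - e)) ^ Suc m))"
      by (simp add: mult_ac)
  qed simp
  then show ?thesis unfolding e_def .
qed

lemma word_mult_corner:
  fixes p a b :: "'a::ring_1"
  assumes pp: "p * p = p" and pa: "p * a * p = a * p" and pb: "p * b * p = b * p"
  shows "ts \<noteq> [] \<Longrightarrow> word (a * p) (b * p) ts = word a b ts * p"
proof (induction ts)
  case (Cons t ts)
  have pw: "p * word a b us * p = word a b us * p" for us
  proof (induction us)
    case (Cons u us)
    define c where "c = (if u then a else b)"
    have pc: "p * c * p = c * p" unfolding c_def using pa pb by simp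
    have "p * word a b (u # us) * p = (p * c * p) * word a b us * p"
      unfolding word_Cons c_def[symmetric] using Cons by (simp add: mult.assoc)
    also have "\<dots> = word a b (u # us) * p"
      unfolding pc word_Cons c_def[symmetric] using Cons by (simp add: mult.assoc)
    finally show ?case .
  qed (simp add: pp)
  show ?case
  proof (cases "ts = []")
    case False
    then show ?thesis using Cons.IH pw[of ts] by (simp add: word_Cons mult.assoc)
  qed (simp add: word_Cons)
qed simp

lemma word_comm_compress:
  fixes e a b :: "'a::ring_1"
  assumes ee: "e * e = e" and ea: "e * a * (1 - e) = 0" and eb: "e * b * (1 - e) = 0"
    and ab: "word_comm k a b" and k: "0 < k"
  shows "word_comm k (a * (1 - e)) (b * (1 - e))"
  unfolding word_comm_def
proof (intro allI impI)
  define p where "p = 1 - e"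
  have corner: "p * y * p = y * p" if "e * y * p = 0" for y
  proof -
    have "y * p = e * y * p + p * y * p" unfolding p_def by (simp add: algebra_simps)
    then show ?thesis using that by simp
  qed
  have pa: "p * a * p = a * p" and pb: "p * b * p = b * p"
    using corner ea eb unfolding p_def by simp_all
  fix ts :: "bool list" assume ts: "length ts = k"
  then have "ts \<noteq> []" using k by auto
  note wp = word_mult_corner[OF idempotent_one_minus[OF ee, folded p_def] pa pb this]
  have "word (a * p) (b * p) ts * (a * p) * (b * p) = word a b ts * (p * a * p) * (b * p)"
    unfolding wp by (simp add: mult.assoc)
  also have "\<dots> = word a b ts * a * b * p" unfolding pa using pb by (simp add: mult.assoc)
  also have "\<dots> = word a b ts * b * a * p" using ab ts unfolding word_comm_def by simp
  also have "\<dots> = word a b ts * (p * b * p) * (a * p)" unfolding pb using pa by (simp add: mult.assoc)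
  also have "\<dots> = word (a * p) (b * p) ts * (b * p) * (a * p)" unfolding wp by (simp add: mult.assoc)
  finally show "word (a * (1 - e)) (b * (1 - e)) ts * (a * (1 - e)) * (b * (1 - e)) =
      word (a * (1 - e)) (b * (1 - e)) ts * (b * (1 - e)) * (a * (1 - e))"
    unfolding p_def .
qed

lemma pow_quasi_idem_hirano_corner:
  fixes b y :: "'a::real_normed_algebra_1"
  assumes g: "hirano_inverse b y"
  shows "pow_quasi_idem (b * (b * y))"
proof -
  define f where "f = b * y"
  obtain n where n: "0 < n" "norm_qnil (b ^ n - f)" using g unfolding hirano_inverse_def f_def by blast
  have ff: "f * f = f" and bf: "commute b f" unfolding f_def using hirano_inverseD[OF g] by simp_all
  have qb: "norm_qnil (b ^ n - (b ^ n)\<^sup>2)"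
    using quasi_idem_power_if_hirano[OF g] n(2) unfolding f_def quasi_idem_def by simp
  have fbn: "f * (b ^ n * z) = b ^ n * (f * z)" for z
    using commuteD[OF commute_power_left[OF bf, of n]] by (simp add: mult.assoc[symmetric])
  have bfn: "(b * f) ^ n = b ^ n * f"
    using power_mult_commute[OF bf, of n] idempotent_power[OF ff n(1)] by simp
  have "((b * f) ^ n)\<^sup>2 = (b ^ n)\<^sup>2 * f"
    unfolding bfn power2_eq_square using ff by (simp add: mult.assoc fbn)
  then have "(b * f) ^ n - ((b * f) ^ n)\<^sup>2 = (b ^ n - (b ^ n)\<^sup>2) * f"
    unfolding bfn by (simp add: algebra_simps)
  moreover have "norm_qnil ((b ^ n - (b ^ n)\<^sup>2) * f)"
    using qb bf by (intro norm_qnil_mult_right) (auto intro!: commute_intros dest: commute_sym)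
  ultimately show ?thesis
    unfolding pow_quasi_idem_def quasi_idem_def f_def[symmetric] using n(1) by auto
qed

text \<open>With respect to the spectral idempotent \<open>f = b y\<close> of \<open>b\<close>, the corner \<open>f (b + q) f\<close> is \<open>b f\<close>
  perturbed by a commuting quasinilpotent, and the complementary corner is a word-commuting sum of
  two quasinilpotents.\<close>

lemma pow_quasi_idem_add_word_comm:
  fixes b q :: "'a::{real_normed_algebra_1,banach}"
  assumes q: "norm_qnil q" and b: "pow_quasi_idem b" and bq: "word_comm k b q" and k: "0 < k"
  shows "pow_quasi_idem (b + q)"
proof -
  obtain y where g: "hirano_inverse b y" using b hirano_inverse_exists_iff by blast
  define f where "f = b * y"
  have ff: "f * f = f" and bf: "commute b f" unfolding f_def using hirano_inverseD[OF g] by simp_all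
  have fb: "f * b = b * f" using bf by (simp add: commute_def)
  have yqb: "y * q * b = f * q" unfolding f_def by (rule hirano_word_comm_swap[OF g bq])
  have fq: "f * q * (1 - f) = 0" unfolding f_def by (rule hirano_triangular[OF g yqb[unfolded f_def]])
  have fbp: "f * b * (1 - f) = 0" unfolding fb using idempotent_orth[OF ff] by (simp add: mult.assoc)
  have split: "z * (1 - f) = f * z * (1 - f) + (1 - f) * z * (1 - f)" for z
    by (simp add: algebra_simps)
  have "f * (q * b) = b * (y * q * b)" unfolding f_def by (simp add: mult.assoc)
  also have "\<dots> = b * (f * q)" unfolding yqb ..
  finally have fqb: "f * (q * (b * z)) = b * (f * (q * z))" for z
    by (simp add: mult.assoc[symmetric])
  have ffz: "f * (f * z) = f * z" for z using ff by (simp add: mult.assoc[symmetric])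
  have fbz: "f * (b * z) = b * (f * z)" for z using fb by (simp add: mult.assoc[symmetric])
  have "commute (b * f) (f * q * f)"
    unfolding commute_def using ff by (simp add: mult.assoc ffz fbz fqb)
  moreover have "norm_qnil (f * q * f)" by (rule norm_qnil_corners(1)[OF ff fq q])
  ultimately have "pow_quasi_idem (b * f + f * q * f) \<longleftrightarrow> pow_quasi_idem (b * f)"
    by (rule pow_quasi_idem_add_norm_qnil)
  moreover have "f * (b + q) * f = b * f + f * q * f"
    using ff by (simp add: distrib_left distrib_right fb mult.assoc)
  ultimately have "pow_quasi_idem (f * (b + q) * f)"
    using pow_quasi_idem_hirano_corner[OF g] unfolding f_def[symmetric] by simp
  moreover have "pow_quasi_idem ((1 - f) * (b + q) * (1 - f))"
  proof -
    have "(1 - f) * (b + q) * (1 - f) = b * (1 - f) + q * (1 - f)"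
      using split[of b] split[of q] fq fbp by (simp add: distrib_left distrib_right)
    moreover have "norm_qnil (b * (1 - f))" unfolding f_def by (rule norm_qnil_hirano_complement[OF g])
    moreover have "norm_qnil (q * (1 - f))"
      using norm_qnil_corners(2)[OF ff fq q] split[of q] fq by simp
    moreover have "word_comm k (b * (1 - f)) (q * (1 - f))" by (rule word_comm_compress[OF ff fbp fq bq k])
    ultimately show ?thesis by (simp add: norm_qnil_add_word_comm pow_quasi_idem_if_norm_qnil)
  qed
  moreover have "f * (b + q) * (1 - f) = 0" using fq fbp by (simp add: distrib_left distrib_right)
  ultimately show ?thesis using pow_quasi_idem_triangular[OF ff] by blast
qed

lemma pow_quasi_idem_mult_corner_unit:
  fixes h g e :: "'a::real_normed_algebra_1"
  assumes hg: "commute h g" and eg: "commute e g" and e_g: "e * g = g"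
    and n: "0 < n" and q: "norm_qnil (h ^ n - e)"
  shows "pow_quasi_idem (h * g) \<longleftrightarrow> pow_quasi_idem g"
proof -
  have "e * g ^ n = g ^ n" using n e_g by (cases n) (simp_all add: mult.assoc[symmetric])
  then have "(h * g) ^ n = g ^ n + (h ^ n - e) * g ^ n"
    unfolding power_mult_commute[OF hg] by (simp add: algebra_simps)
  moreover have "commute (g ^ n) ((h ^ n - e) * g ^ n)"
    using hg eg by (auto intro!: commute_intros dest: commute_sym)
  moreover have "norm_qnil ((h ^ n - e) * g ^ n)"
    using q hg eg by (intro norm_qnil_mult_right) (auto intro!: commute_intros dest: commute_sym)
  ultimately have "pow_quasi_idem ((h * g) ^ n) \<longleftrightarrow> pow_quasi_idem (g ^ n)"
    by (simp add: pow_quasi_idem_add_norm_qnil)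
  then show ?thesis using pow_quasi_idem_power_iff[OF n, of "h * g"] pow_quasi_idem_power_iff[OF n, of g]
    by blast
qed

lemma word_comm_if_prod_list:
  assumes "\<And>\<alpha>s. length \<alpha>s = k \<Longrightarrow> set \<alpha>s \<subseteq> {a, b} \<Longrightarrow> prod_list \<alpha>s * a * b = prod_list \<alpha>s * b * a"
  shows "word_comm k a b"
  unfolding word_comm_def word_def
proof (intro allI impI)
  fix ts :: "bool list" assume "length ts = k"
  then show "prod_list (map (\<lambda>t. if t then a else b) ts) * a * b =
      prod_list (map (\<lambda>t. if t then a else b) ts) * b * a"
    by (intro assms) auto
qed

lemma pow_quasi_idem_one_plus_iff_corner:
  assumes g: "hirano_inverse a x" and tri: "(a * x) * b * (1 - a * x) = 0"
  shows "pow_quasi_idem (1 + x * b) \<longleftrightarrow> pow_quasi_idem (a * x + x * b * (a * x))"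
proof -
  define e where "e = a * x"
  have ee: "e * e = e" and xe: "x * e = x" and ex: "e * x = x"
    unfolding e_def using hirano_inverseD[OF g] by simp_all
  have "x * b * (1 - e) = x * (e * b * (1 - e))" using xe by (simp add: mult.assoc[symmetric])
  then have xb: "x * b * (1 - e) = 0" using tri unfolding e_def by simp
  have px: "(1 - e) * x = 0" using ex by (simp add: algebra_simps)
  have "e * (1 + x * b) * (1 - e) = e * (1 - e) + (e * x) * b * (1 - e)" by (simp add: algebra_simps)
  also have "\<dots> = 0" using xb idempotent_orth(1)[OF ee] ex by simp
  finally have "e * (1 + x * b) * (1 - e) = 0" .
  moreover have "(1 - e) * (1 + x * b) * (1 - e) = (1 - e) * (1 - e) + ((1 - e) * x) * b * (1 - e)"
    by (simp add: algebra_simps)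
  then have "(1 - e) * (1 + x * b) * (1 - e) = 1 - e" using idempotent_one_minus[OF ee] px by simp
  moreover have "e * (1 + x * b) * e = e * e + (e * x) * b * e" by (simp add: algebra_simps)
  then have "e * (1 + x * b) * e = e + x * b * e" using ee ex by simp
  moreover have "pow_quasi_idem (1 - e)"
    unfolding pow_quasi_idem_def using quasi_idem_if_idempotent[OF idempotent_one_minus[OF ee]] by force
  ultimately show ?thesis
    using pow_quasi_idem_triangular[OF ee, of "1 + x * b"] unfolding e_def by simp
qed

lemma pow_quasi_idem_add_iff_corner:
  fixes a b x :: "'a::{real_normed_algebra_1,banach}"
  assumes g: "hirano_inverse a x" and tri: "(a * x) * b * (1 - a * x) = 0"
    and ab: "word_comm k a b" and k: "0 < k" and b: "pow_quasi_idem b"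
  shows "pow_quasi_idem (a + b) \<longleftrightarrow> pow_quasi_idem ((a * x) * (a + b) * (a * x))"
proof -
  define e where "e = a * x"
  have ee: "e * e = e" and ce: "commute a e" unfolding e_def using hirano_inverseD[OF g] by simp_all
  have ae: "a * e = e * a" using ce by (simp add: commute_def)
  have ebp: "e * b * (1 - e) = 0" using tri unfolding e_def .
  have eap: "e * a * (1 - e) = 0" using idempotent_orth(1)[OF ee] by (simp add: ae[symmetric] mult.assoc)
  have split: "z * (1 - e) = e * z * (1 - e) + (1 - e) * z * (1 - e)" for z
    by (simp add: algebra_simps)
  have "pow_quasi_idem ((1 - e) * b * (1 - e))"
    using pow_quasi_idem_triangular[OF ee ebp] b by simp
  moreover have pb: "(1 - e) * b * (1 - e) = b * (1 - e)" using split[of b] ebp by simp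
  moreover have "norm_qnil (a * (1 - e))" unfolding e_def by (rule norm_qnil_hirano_complement[OF g])
  moreover have "word_comm k (b * (1 - e)) (a * (1 - e))"
    by (rule word_comm_swap[OF word_comm_compress[OF ee eap ebp ab k]])
  ultimately have "pow_quasi_idem (b * (1 - e) + a * (1 - e))"
    using pow_quasi_idem_add_word_comm k by simp
  moreover have "(1 - e) * a * (1 - e) = a * (1 - e)" using split[of a] eap by simp
  then have "(1 - e) * (a + b) * (1 - e) = b * (1 - e) + a * (1 - e)"
    using pb by (simp add: distrib_left distrib_right)
  moreover have "e * (a + b) * (1 - e) = 0" using eap ebp by (simp add: distrib_left distrib_right)
  ultimately show ?thesis using pow_quasi_idem_triangular[OF ee] unfolding e_def by simp
qed

lemma pow_quasi_idem_sum_corner_iff: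
  fixes a b x :: "'a::real_normed_algebra_1"
  assumes g: "hirano_inverse a x" and xba: "x * b * a = (a * x) * b"
  shows "pow_quasi_idem ((a * x) * (a + b) * (a * x)) \<longleftrightarrow> pow_quasi_idem (a * x + x * b * (a * x))"
proof -
  define e where "e = a * x"
  define g' where "g' = e + x * b * e"
  have ee: "e * e = e" and ex: "e * x = x" and ce: "commute a e"
    unfolding e_def using hirano_inverseD[OF g] by simp_all
  have ae: "a * e = e * a" using ce by (simp add: commute_def)
  obtain n where n: "0 < n" "norm_qnil (a ^ n - e)" using g unfolding hirano_inverse_def e_def by blast
  have aex: "(a * e) * x = e" using ex by (simp add: mult.assoc) (simp add: e_def)
  have "e * (a + b) * e = (e * a) * e + e * b * e" by (simp add: algebra_simps)
  moreover have "(a * e) * g' = (a * e) * e + ((a * e) * x) * b * e"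
    unfolding g'_def by (simp add: algebra_simps)
  moreover have "(e * a) * e = a * e" "(a * e) * e = a * e" using ee by (simp_all add: ae[symmetric] mult.assoc)
  ultimately have corner: "e * (a + b) * e = (a * e) * g'" using aex by simp
  have eg: "e * g' = g'" "g' * e = g'" unfolding g'_def using ee ex
    by (simp_all add: distrib_left distrib_right mult.assoc) (simp add: mult.assoc[symmetric])
  have "a * (x * b * e) = e * b * e" unfolding e_def by (simp add: mult.assoc)
  moreover have "x * b * e * a = x * b * a * e" by (simp add: mult.assoc ae)
  then have "x * b * e * a = e * b * e" using xba unfolding e_def by simp
  ultimately have "commute a g'" unfolding g'_def commute_def by (simp add: distrib_left distrib_right ae)
  moreover have ceg: "commute e g'" using eg by (simp add: commute_def)
  ultimately have "commute (a * e) g'" by (intro commute_mult_left)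
  moreover have "(a * e) ^ n - e = (a ^ n - e) * e"
    using power_mult_commute[OF ce, of n] idempotent_power[OF ee n(1)] ee by (simp add: algebra_simps)
  then have "norm_qnil ((a * e) ^ n - e)"
    using n(2) ce by (simp add: norm_qnil_mult_right commute_intros commute_sym)
  ultimately have "pow_quasi_idem ((a * e) * g') \<longleftrightarrow> pow_quasi_idem g'"
    using pow_quasi_idem_mult_corner_unit[OF _ ceg eg(1) n(1)] by blast
  then have "pow_quasi_idem (e * (a + b) * e) \<longleftrightarrow> pow_quasi_idem g'" unfolding corner .
  then show ?thesis unfolding g'_def e_def .
qed

theorem theorem3p10:
  fixes a b :: "'a::complex_banach_algebra_1" and k :: nat
  assumes "k > 0"
    and "gpiH_invertible a" and "gpiH_invertible b"
    and "\<And>\<alpha>s. length \<alpha>s = k \<Longrightarrow> set \<alpha>s \<subseteq> {a, b} \<Longrightarrow>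
           prod_list \<alpha>s * a * b = prod_list \<alpha>s * b * a"
  shows "gpiH_invertible (1 + gpiH_inv a * b) \<longleftrightarrow> gpiH_invertible (a + b)"
proof -
  obtain x where g: "hirano_inverse a x"
    using assms(2) unfolding gpiH_invertible_def is_gpiH_inverse_iff_hirano by blast
  have ab: "word_comm k a b" using assms(4) by (rule word_comm_if_prod_list)
  have xba: "x * b * a = (a * x) * b" by (rule hirano_word_comm_swap[OF g ab])
  have tri: "(a * x) * b * (1 - a * x) = 0" by (rule hirano_triangular[OF g xba])
  have b: "pow_quasi_idem b" using assms(3) by (simp add: gpiH_invertible_iff_pow_quasi_idem)
  show ?thesis
    unfolding gpiH_invertible_iff_pow_quasi_idem gpiH_inv_eq[OF g]
    using pow_quasi_idem_one_plus_iff_corner[OF g tri] pow_quasi_idem_add_iff_corner[OF g tri ab assms(1) b]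
      pow_quasi_idem_sum_corner_iff[OF g xba]
    by simp
qed

end
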